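(* Suppose that for all $0\le t\le T$, $\lambda_{\min}\big(\mathbf{G}(t)+\frac{1}{\alpha^2}\mathbf{V}(t)\big)\ge\frac{\omega}{2}$ for some $\omega>0$, and $|g_k(t)-g_k(0)|\le R_g$ for all $k$, where $R_g\le 1/(m/\delta)^{1/d}$. Then with probability at least $1-\delta$ over the initialization, $$\|\mathbf{v}_k(t)-\mathbf{v}_k(0)\|_2\le\frac{4\sqrt n\,\|\mathbf{f}(0)-\mathbf{y}\|_2}{\alpha\,\omega\sqrt m}$$ for each $k$ and all $0\le t\le T$.
   Context: Data $(\mathbf{x}_i,y_i)\in\mathbb{R}^d\times\mathbb{R}$, $i=1,\dots,n$, with $\|\mathbf{x}_i\|_2\le1$. Network $f(\mathbf{x})=\frac{1}{\sqrt m}\sum_{k=1}^mc_k\sigma(g_k\mathbf{v}_k^\top\mathbf{x}/\|\mathbf{v}_k\|_2)$, $\sigma(s)=\max\{s,0\}$; initialization with $\alpha>0$: independently $\mathbf{v}_k(0)\sim N(0,\alpha^2\mathbf{I})$, $c_k$ uniform on $\{-1,1\}$, $g_k(0)=\|\mathbf{v}_k(0)\|_2/\alpha$. Gradient flow on $L=\frac12\sum_i(f(\mathbf{x}_i)-y_i)^2$: $\frac{d\mathbf{v}_k}{dt}=-\partial L/\partial\mathbf{v}_k$, $\frac{dg_k}{dt}=-\partial L/\partial g_k$, $c_k$ fixed; $\mathbf{f}(t)$ predictions, $\mathbf{y}$ targets. Notation: $\mathbf{x}^{\mathbf{u}^\perp}=\mathbf{x}-\mathbf{u}\mathbf{u}^\top\mathbf{x}/\|\mathbf{u}\|_2^2$,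 $\mathbb{1}_{ik}(t)=\mathbb{1}\{\mathbf{v}_k(t)^\top\mathbf{x}_i\ge0\}$, $\mathbf{V}_{ij}(t)=\frac1m\sum_k\big(\frac{\alpha c_kg_k(t)}{\|\mathbf{v}_k(t)\|_2}\big)^2\langle\mathbf{x}_i^{\mathbf{v}_k(t)^\perp},\mathbf{x}_j^{\mathbf{v}_k(t)^\perp}\rangle\mathbb{1}_{ik}(t)\mathbb{1}_{jk}(t)$, $\mathbf{G}_{ij}(t)=\frac1m\sum_k\sigma(\mathbf{v}_k(t)^\top\mathbf{x}_i)\sigma(\mathbf{v}_k(t)^\top\mathbf{x}_j)/\|\mathbf{v}_k(t)\|_2^2$. Under gradient flow the predictions evolve as $\frac{d\mathbf{f}}{dt}=-(\mathbf{V}(t)/\alpha^2+\mathbf{G}(t))(\mathbf{f}(t)-\mathbf{y})$. *)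

theory Defs
  imports "HOL-Probability.Probability"
begin

text \<open>Vectors of R^d are represented as functions nat => real, only indices j < d matter.
  Data: x i j (i < n, j < d), targets y i.  Neuron k (k < m): direction v k, scale g k, sign c k.\<close>

definition dotp :: "nat \<Rightarrow> (nat \<Rightarrow> real) \<Rightarrow> (nat \<Rightarrow> real) \<Rightarrow> real" where
  "dotp d u w = (\<Sum>j<d. u j * w j)"

definition vnorm :: "nat \<Rightarrow> (nat \<Rightarrow> real) \<Rightarrow> real" where
  "vnorm d u = sqrt (\<Sum>j<d. (u j)^2)"

definition relu :: "real \<Rightarrow> real" where
  "relu s = max s 0"

definition perp :: "nat \<Rightarrow> (nat \<Rightarrow> real) \<Rightarrow> (nat \<Rightarrow> real) \<Rightarrow> nat \<Rightarrow> real" where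
  "perp d u w = (\<lambda>j. w j - u j * dotp d u w / (vnorm d u)^2)"

definition ind :: "bool \<Rightarrow> real" where
  "ind b = (if b then 1 else 0)"

definition fnet :: "nat \<Rightarrow> nat \<Rightarrow> (nat \<Rightarrow> real) \<Rightarrow> (nat \<Rightarrow> real) \<Rightarrow> (nat \<Rightarrow> nat \<Rightarrow> real)
    \<Rightarrow> (nat \<Rightarrow> real) \<Rightarrow> real" where
  "fnet m d c g v z = (1 / sqrt m) * (\<Sum>k<m. c k * relu (g k * dotp d (v k) z / vnorm d (v k)))"

text \<open>partial derivative of L = 1/2 sum_i (f(x_i)-y_i)^2 w.r.t. v_k (component j), with the
  ReLU convention sigma'(s) = 1{s >= 0} as in the paper\<close>
definition grad_v :: "nat \<Rightarrow> nat \<Rightarrow> nat \<Rightarrow> (nat \<Rightarrow> nat \<Rightarrow> real) \<Rightarrow> (nat \<Rightarrow> real)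
    \<Rightarrow> (nat \<Rightarrow> real) \<Rightarrow> (nat \<Rightarrow> real) \<Rightarrow> (nat \<Rightarrow> nat \<Rightarrow> real) \<Rightarrow> nat \<Rightarrow> nat \<Rightarrow> real" where
  "grad_v n m d x y c g v k j =
     (1 / sqrt m) * (\<Sum>i<n. (fnet m d c g v (x i) - y i) * c k * g k / vnorm d (v k)
        * ind (dotp d (v k) (x i) \<ge> 0) * perp d (v k) (x i) j)"

definition grad_g :: "nat \<Rightarrow> nat \<Rightarrow> nat \<Rightarrow> (nat \<Rightarrow> nat \<Rightarrow> real) \<Rightarrow> (nat \<Rightarrow> real)
    \<Rightarrow> (nat \<Rightarrow> real) \<Rightarrow> (nat \<Rightarrow> real) \<Rightarrow> (nat \<Rightarrow> nat \<Rightarrow> real) \<Rightarrow> nat \<Rightarrow> real" where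
  "grad_g n m d x y c g v k =
     (1 / sqrt m) * (\<Sum>i<n. (fnet m d c g v (x i) - y i) * c k
        * relu (dotp d (v k) (x i)) / vnorm d (v k))"

definition Vmat :: "nat \<Rightarrow> nat \<Rightarrow> real \<Rightarrow> (nat \<Rightarrow> nat \<Rightarrow> real) \<Rightarrow> (nat \<Rightarrow> real)
    \<Rightarrow> (nat \<Rightarrow> real) \<Rightarrow> (nat \<Rightarrow> nat \<Rightarrow> real) \<Rightarrow> nat \<Rightarrow> nat \<Rightarrow> real" where
  "Vmat m d \<alpha> x c g v i i' = (1 / real m) * (\<Sum>k<m. (\<alpha> * c k * g k / vnorm d (v k))^2
      * dotp d (perp d (v k) (x i)) (perp d (v k) (x i'))
      * ind (dotp d (v k) (x i) \<ge> 0) * ind (dotp d (v k) (x i') \<ge> 0))"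

definition Gmat :: "nat \<Rightarrow> nat \<Rightarrow> (nat \<Rightarrow> nat \<Rightarrow> real) \<Rightarrow> (nat \<Rightarrow> nat \<Rightarrow> real)
    \<Rightarrow> nat \<Rightarrow> nat \<Rightarrow> real" where
  "Gmat m d x v i i' = (1 / real m) * (\<Sum>k<m. relu (dotp d (v k) (x i)) * relu (dotp d (v k) (x i'))
      / (vnorm d (v k))^2)"

definition is_eigenvalue :: "nat \<Rightarrow> (nat \<Rightarrow> nat \<Rightarrow> real) \<Rightarrow> real \<Rightarrow> bool" where
  "is_eigenvalue n A e \<longleftrightarrow> (\<exists>u. (\<exists>i<n. u i \<noteq> 0) \<and> (\<forall>i<n. (\<Sum>j<n. A i j * u j) = e * u i))"

definition lambda_min :: "nat \<Rightarrow> (nat \<Rightarrow> nat \<Rightarrow> real) \<Rightarrow> real" where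
  "lambda_min n A = Min {e. is_eigenvalue n A e}"

text \<open>Initialization distribution: v_k(0) ~ N(0, alpha^2 I_d) i.i.d. (coordinates i.i.d. N(0,alpha^2)),
  c_k uniform on {-1,1}, all independent.  Sample point: (V, c) with V k j, c k.\<close>
definition init_measure :: "nat \<Rightarrow> nat \<Rightarrow> real \<Rightarrow> ((nat \<Rightarrow> nat \<Rightarrow> real) \<times> (nat \<Rightarrow> real)) measure" where
  "init_measure m d \<alpha> =
     (PiM {..<m} (\<lambda>_. PiM {..<d} (\<lambda>_. density lborel (normal_density 0 \<alpha>))))
     \<Otimes>\<^sub>M (PiM {..<m} (\<lambda>_. measure_pmf (pmf_of_set {-1, 1::real})))"

definition grad_flow ::
  "nat \<Rightarrow> nat \<Rightarrow> nat \<Rightarrow> (nat \<Rightarrow> nat \<Rightarrow> real) \<Rightarrow> (nat \<Rightarrow> real) \<Rightarrow> real \<Rightarrow> real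
   \<Rightarrow> (nat \<Rightarrow> nat \<Rightarrow> real) \<Rightarrow> (nat \<Rightarrow> real)
   \<Rightarrow> (real \<Rightarrow> nat \<Rightarrow> nat \<Rightarrow> real) \<Rightarrow> (real \<Rightarrow> nat \<Rightarrow> real) \<Rightarrow> bool" where
  "grad_flow n m d x y \<alpha> T V c v g \<longleftrightarrow>
     (\<forall>k<m. \<forall>j<d. v 0 k j = V k j) \<and>
     (\<forall>k<m. g 0 k = vnorm d (V k) / \<alpha>) \<and>
     (\<forall>t\<in>{0..T}. \<forall>k<m. \<forall>j<d.
        ((\<lambda>s. v s k j) has_real_derivative (- grad_v n m d x y c (g t) (v t) k j)) (at t within {0..T})) \<and>
     (\<forall>t\<in>{0..T}. \<forall>k<m.
        ((\<lambda>s. g s k) has_real_derivative (- grad_g n m d x y c (g t) (v t) k)) (at t within {0..T}))"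

end

theory Submission
  imports Defs "Jordan_Normal_Form.Char_Poly"
begin

(*
  With probability at least 1 - \<delta> every neuron has a coordinate of v\<^sub>k(0) of size at least \<alpha> r,
  where r = (\<delta>/m)\<^sup>1\<^sup>/\<^sup>d: a N(0, \<alpha>\<^sup>2) coordinate falls into (-\<alpha> r, \<alpha> r) with probability at most r,
  all d coordinates of a neuron do so with probability at most r\<^sup>d, and a union bound over the m
  neurons costs m r\<^sup>d = \<delta>. Then g\<^sub>k(0) = \<parallel>v\<^sub>k(0)\<parallel> / \<alpha> \<ge> r \<ge> R\<^sub>g, which keeps g\<^sub>k(t) in [0, 2 g\<^sub>k(0)].

  On this event the argument is deterministic. The gradient in v\<^sub>k is orthogonal to v\<^sub>k, so \<parallel>v\<^sub>k(t)\<parallel>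
  is constant. Away from the countably many times at which a pre-activation v\<^sub>k\<^sup>T x\<^sub>i crosses zero with
  nonzero speed, the chain rule gives f' = -(G + V/\<alpha>\<^sup>2)(f - y), so d/dt \<parallel>f - y\<parallel>\<^sup>2 \<le> -\<omega> \<parallel>f - y\<parallel>\<^sup>2 and
  \<parallel>f(t) - y\<parallel> \<le> e\<^sup>-\<^sup>\<omega>\<^sup>t\<^sup>/\<^sup>2 \<parallel>f(0) - y\<parallel>. Each data point contributes at most 2 |f(x\<^sub>i) - y\<^sub>i| / (\<alpha> \<surd>m) to the
  norm of the v\<^sub>k-gradient, so \<parallel>v\<^sub>k'(t)\<parallel> \<le> 2 \<surd>n e\<^sup>-\<^sup>\<omega>\<^sup>t\<^sup>/\<^sup>2 \<parallel>f(0) - y\<parallel> / (\<alpha> \<surd>m), and integrating in t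
  gives the bound 4 \<surd>n \<parallel>f(0) - y\<parallel> / (\<alpha> \<omega> \<surd>m).
*)

section \<open>Monotonicity with countably many exceptional points\<close>

text \<open>Otherwise pick a level \<open>y \<notin> \<phi> ` S\<close> strictly between \<open>\<phi> a\<close> and \<open>\<phi> b\<close> and the last time
  \<open>t\<^sub>0\<close> at which \<open>\<phi>\<close> takes it: \<open>\<phi>\<close> drops below \<open>y\<close> right after \<open>t\<^sub>0\<close>, yet has to reach \<open>y\<close> again.\<close>
lemma deriv_neg_off_countable_imp_decreasing:
  fixes \<phi> :: "real \<Rightarrow> real"
  assumes "a \<le> b" and cont: "continuous_on {a..b} \<phi>" and "countable S"
    and deriv: "\<And>t. t \<in> {a..<b} \<Longrightarrow> t \<notin> S \<Longrightarrow>
      \<exists>D < 0. (\<phi> has_real_derivative D) (at t within {a..b})"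
  shows "\<phi> b \<le> \<phi> a"
proof (rule ccontr)
  assume "\<not> \<phi> b \<le> \<phi> a"
  then have "\<phi> a < \<phi> b"
    by simp
  then obtain y where y: "\<phi> a < y" "y < \<phi> b" "y \<notin> \<phi> ` S"
    using real_interval_avoid_countable_set[OF \<open>\<phi> a < \<phi> b\<close> countable_image[OF \<open>countable S\<close>, of \<phi>]]
    by auto
  define Z where "Z = {a..b} \<inter> \<phi> -` {y}"
  have "Z \<noteq> {}"
    using IVT'[of \<phi> a y b] y \<open>a \<le> b\<close> cont by (auto simp: Z_def)
  moreover have "bdd_above Z"
    by (auto simp: Z_def bdd_above_def)
  moreover have "closed Z"
    unfolding Z_def by (intro continuous_closed_preimage cont) auto
  ultimately have "Sup Z \<in> Z"
    by (rule closed_contains_Sup)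
  define t\<^sub>0 where "t\<^sub>0 = Sup Z"
  have "t\<^sub>0 \<in> {a..b}" "\<phi> t\<^sub>0 = y"
    using \<open>Sup Z \<in> Z\<close> by (simp_all add: Z_def t\<^sub>0_def)
  then have "t\<^sub>0 \<in> {a..<b}"
    using y(2) by (cases "t\<^sub>0 = b") auto
  have "t\<^sub>0 \<notin> S"
    using y(3) imageI[of t\<^sub>0 S \<phi>] \<open>\<phi> t\<^sub>0 = y\<close> by auto
  then obtain D where "D < 0" and D: "(\<phi> has_real_derivative D) (at t\<^sub>0 within {a..b})"
    using deriv \<open>t\<^sub>0 \<in> {a..<b}\<close> by blast
  then obtain h where "h > 0"
    and drop: "\<forall>h'>0. t\<^sub>0 + h' \<in> {a..b} \<longrightarrow> h' < h \<longrightarrow> \<phi> (t\<^sub>0 + h') < \<phi> t\<^sub>0"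
    using has_real_derivative_neg_dec_right[OF D \<open>D < 0\<close>] by blast
  define s where "s = min b (t\<^sub>0 + h / 2)"
  have "t\<^sub>0 < s" "s \<le> b" "s - t\<^sub>0 < h"
    using \<open>h > 0\<close> \<open>t\<^sub>0 \<in> {a..<b}\<close> by (auto simp: s_def)
  then have "\<phi> s < y"
    using drop[rule_format, of "s - t\<^sub>0"] \<open>t\<^sub>0 \<in> {a..<b}\<close> \<open>\<phi> t\<^sub>0 = y\<close> by simp
  moreover have "continuous_on {s..b} \<phi>"
    using cont \<open>t\<^sub>0 \<in> {a..<b}\<close> \<open>t\<^sub>0 < s\<close> by (auto elim: continuous_on_subset)
  ultimately obtain t' where "t' \<in> {s..b}" "\<phi> t' = y"
    using IVT'[of \<phi> s y b] y \<open>s \<le> b\<close> by auto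
  then have "t' \<in> Z"
    using \<open>t\<^sub>0 \<in> {a..<b}\<close> \<open>t\<^sub>0 < s\<close> by (auto simp: Z_def)
  then have "t' \<le> t\<^sub>0"
    using cSup_upper \<open>bdd_above Z\<close> by (simp add: t\<^sub>0_def)
  then show False
    using \<open>t\<^sub>0 < s\<close> \<open>t' \<in> {s..b}\<close> by simp
qed

lemma deriv_nonpos_off_countable_imp_decreasing:
  fixes \<psi> :: "real \<Rightarrow> real"
  assumes "a \<le> b" and cont: "continuous_on {a..b} \<psi>" and "countable S"
    and deriv: "\<And>t. t \<in> {a..<b} \<Longrightarrow> t \<notin> S \<Longrightarrow>
      \<exists>D \<le> 0. (\<psi> has_real_derivative D) (at t within {a..b})"
  shows "\<psi> b \<le> \<psi> a"
proof (rule field_le_epsilon)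
  fix e :: real assume "e > 0"
  define \<epsilon> where "\<epsilon> = e / (b - a + 1)"
  have "\<epsilon> > 0"
    using \<open>e > 0\<close> \<open>a \<le> b\<close> by (simp add: \<epsilon>_def)
  have "(\<lambda>t. \<psi> t - \<epsilon> * (t - a)) b \<le> (\<lambda>t. \<psi> t - \<epsilon> * (t - a)) a"
  proof (rule deriv_neg_off_countable_imp_decreasing[OF \<open>a \<le> b\<close> _ \<open>countable S\<close>])
    show "continuous_on {a..b} (\<lambda>t. \<psi> t - \<epsilon> * (t - a))"
      by (intro continuous_intros cont)
    fix t assume "t \<in> {a..<b}" "t \<notin> S"
    then obtain D where "D \<le> 0" "(\<psi> has_real_derivative D) (at t within {a..b})"
      using deriv by blast
    then show "\<exists>D < 0. ((\<lambda>t. \<psi> t - \<epsilon> * (t - a)) has_real_derivative D) (at t within {a..b})"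
      using \<open>\<epsilon> > 0\<close> by (intro exI[of _ "D - \<epsilon>"]) (auto intro!: derivative_eq_intros)
  qed
  moreover have "\<epsilon> * (b - a) \<le> e"
    using \<open>e > 0\<close> \<open>a \<le> b\<close> by (simp add: \<epsilon>_def field_simps)
  ultimately show "\<psi> b \<le> \<psi> a + e"
    by simp
qed

lemma deriv_nonpos_off_countable_imp_le_start:
  fixes \<psi> :: "real \<Rightarrow> real"
  assumes t: "t \<in> {a..b}" and cont: "continuous_on {a..b} \<psi>" and "countable S"
    and deriv: "\<And>s. s \<in> {a..b} \<Longrightarrow> s \<notin> S \<Longrightarrow>
      \<exists>D \<le> 0. (\<psi> has_real_derivative D) (at s within {a..b})"
  shows "\<psi> t \<le> \<psi> a"
proof (rule deriv_nonpos_off_countable_imp_decreasing[where b = t and \<psi> = \<psi>, OF _ _ \<open>countable S\<close>])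
  show "a \<le> t" "continuous_on {a..t} \<psi>"
    using cont t by (auto elim: continuous_on_subset)
  fix s assume s: "s \<in> {a..<t}" "s \<notin> S"
  then have "s \<in> {a..b}"
    using t by auto
  then obtain D where "D \<le> 0" "(\<psi> has_real_derivative D) (at s within {a..b})"
    using deriv s(2) by blast
  moreover have "{a..t} \<subseteq> {a..b}"
    using t by auto
  ultimately show "\<exists>D \<le> 0. (\<psi> has_real_derivative D) (at s within {a..t})"
    using has_field_derivative_subset by blast
qed

lemma countable_if_all_isolated:
  fixes S :: "'a::second_countable_topology set"
  assumes "\<And>x. x \<in> S \<Longrightarrow> x isolated_in S"
  shows "countable S"
proof -
  obtain \<B> :: "'a set set" where "countable \<B>" and basis: "topological_basis \<B>"
    using ex_countable_basis by blast
  have "\<exists>B\<in>\<B>. B \<inter> S = {x}" if x: "x \<in> S" for x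
  proof -
    obtain T where "open T" "T \<inter> S = {x}"
      using assms[OF x] by (auto simp: isolated_in_def)
    moreover obtain B where "B \<in> \<B>" "x \<in> B" "B \<subseteq> T"
      using topological_basisE[OF basis \<open>open T\<close>] \<open>T \<inter> S = {x}\<close> by blast
    ultimately show ?thesis
      using x by blast
  qed
  then obtain f where f: "\<And>x. x \<in> S \<Longrightarrow> f x \<in> \<B> \<and> f x \<inter> S = {x}"
    by metis
  then have "inj_on f S"
    by (metis inj_onI singleton_inject)
  moreover have "countable (f ` S)"
    using f \<open>countable \<B>\<close> by (blast intro: countable_subset)
  ultimately show ?thesis
    using countable_image_inj_on by blast
qed

lemma countable_zeros_with_nonzero_derivative:
  fixes h h' :: "real \<Rightarrow> real"
  assumes "\<And>t. t \<in> X \<Longrightarrow> (h has_real_derivative h' t) (at t within X)"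
  shows "countable {t \<in> X. h t = 0 \<and> h' t \<noteq> 0}"
proof (rule countable_if_all_isolated)
  fix t assume t: "t \<in> {t \<in> X. h t = 0 \<and> h' t \<noteq> 0}"
  then have "((\<lambda>s. (h s - h t) / (s - t)) \<longlongrightarrow> h' t) (at t within X)"
    using assms unfolding has_field_derivative_iff by blast
  then have "\<forall>\<^sub>F s in at t within X. (h s - h t) / (s - t) \<noteq> 0"
    using t by (intro tendsto_imp_eventually_ne) auto
  then obtain e where "e > 0" and "\<And>s. s \<in> X \<Longrightarrow> s \<noteq> t \<Longrightarrow> dist s t < e \<Longrightarrow> h s \<noteq> 0"
    using t unfolding eventually_at by auto
  then show "t isolated_in {t \<in> X. h t = 0 \<and> h' t \<noteq> 0}"
    using t by (auto simp: isolated_in_dist_Ex_iff dist_commute)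
qed

lemma has_real_derivative_relu:
  fixes h :: "real \<Rightarrow> real"
  assumes hD: "(h has_real_derivative D) (at t within X)" and kink: "h t = 0 \<Longrightarrow> D = 0"
  shows "((\<lambda>s. relu (h s)) has_real_derivative ind (h t \<ge> 0) * D) (at t within X)"
proof -
  have lim: "(h \<longlongrightarrow> h t) (at t within X)"
    using DERIV_continuous[OF hD] by (simp add: continuous_within)
  consider "h t > 0" | "h t < 0" | "h t = 0" "D = 0"
    using kink by fastforce
  then show ?thesis
  proof cases
    case 1
    then have "\<forall>\<^sub>F s in at t within X. h s > 0"
      using lim by (simp add: order_tendsto_iff)
    then have "\<forall>\<^sub>F s in at t within X. relu (h s) = h s"
      by eventually_elim (simp add: relu_def)
    then have "((\<lambda>s. relu (h s)) has_real_derivative D) (at t within X)"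
      using has_field_derivative_cong_eventually[of "\<lambda>s. relu (h s)" h] 1 hD by (simp add: relu_def)
    then show ?thesis
      using 1 by (simp add: ind_def)
  next
    case 2
    then have "\<forall>\<^sub>F s in at t within X. h s < 0"
      using lim by (simp add: order_tendsto_iff)
    then have "\<forall>\<^sub>F s in at t within X. relu (h s) = 0"
      by eventually_elim (simp add: relu_def)
    then have "((\<lambda>s. relu (h s)) has_real_derivative 0) (at t within X)"
      using has_field_derivative_cong_eventually[of _ "\<lambda>_. 0"] 2 by (fastforce simp: relu_def)
    then show ?thesis
      using 2 by (simp add: ind_def)
  next
    case 3
    have "((\<lambda>s. (h s - h t) / (s - t)) \<longlongrightarrow> 0) (at t within X)"
      using hD 3 by (simp add: has_field_derivative_iff)
    then have "((\<lambda>s. (relu (h s) - relu (h t)) / (s - t)) \<longlongrightarrow> 0) (at t within X)"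
      by (rule Lim_null_comparison[OF always_eventually, rotated, OF tendsto_norm_zero])
        (use 3 in \<open>auto simp: relu_def abs_divide divide_right_mono\<close>)
    then show ?thesis
      using 3 by (simp add: has_field_derivative_iff)
  qed
qed

section \<open>Vectors indexed by an initial segment of the naturals\<close>

lemma vnorm_eq_L2_set: "vnorm d u = L2_set u {..<d}"
  by (simp add: vnorm_def L2_set_def)

lemma vnorm_nonneg: "vnorm d u \<ge> 0"
  by (simp add: vnorm_eq_L2_set)

lemma vnorm_power2: "(vnorm d u)^2 = (\<Sum>j<d. (u j)^2)"
  by (simp add: vnorm_def sum_nonneg)

lemma abs_le_vnorm: "j < d \<Longrightarrow> \<bar>u j\<bar> \<le> vnorm d u"
  using member_le_L2_set[of "{..<d}" j "\<lambda>j. \<bar>u j\<bar>"] by (simp add: vnorm_eq_L2_set L2_set_def)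

lemma vnorm_scale: "vnorm d (\<lambda>j. a * w j) = \<bar>a\<bar> * vnorm d w"
proof -
  have "vnorm d (\<lambda>j. a * w j) = sqrt (a^2 * (\<Sum>j<d. (w j)^2))"
    unfolding vnorm_def by (simp add: power_mult_distrib sum_distrib_left)
  then show ?thesis
    unfolding vnorm_def real_sqrt_mult by simp
qed

lemma vnorm_sum_le:
  "finite I \<Longrightarrow> vnorm d (\<lambda>j. \<Sum>i\<in>I. w i j) \<le> (\<Sum>i\<in>I. vnorm d (w i))"
proof (induction I rule: finite_induct)
  case (insert i I)
  then have "vnorm d (\<lambda>j. \<Sum>i\<in>insert i I. w i j) \<le> vnorm d (w i) + vnorm d (\<lambda>j. \<Sum>i\<in>I. w i j)"
    using L2_set_triangle_ineq[of "w i"] by (simp add: vnorm_eq_L2_set)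
  then show ?case
    using insert by simp
qed (simp add: vnorm_def)

lemma abs_dotp_le: "\<bar>dotp d a b\<bar> \<le> vnorm d a * vnorm d b"
proof -
  have "\<bar>dotp d a b\<bar> \<le> (\<Sum>j<d. \<bar>a j\<bar> * \<bar>b j\<bar>)"
    unfolding dotp_def by (rule order_trans[OF sum_abs]) (simp add: abs_mult)
  also have "\<dots> \<le> vnorm d a * vnorm d b"
    unfolding vnorm_eq_L2_set by (rule L2_set_mult_ineq)
  finally show ?thesis .
qed

lemma dotp_commute: "dotp d a b = dotp d b a"
  unfolding dotp_def by (simp add: mult.commute)

lemma dotp_scale_left: "dotp d (\<lambda>j. a * u j) w = a * dotp d u w"
  by (simp add: dotp_def sum_distrib_left mult.assoc)

lemma dotp_self: "dotp d u u = (vnorm d u)^2"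
  unfolding vnorm_power2 dotp_def by (simp add: power2_eq_square)

lemma dotp_perp_self: "dotp d u (perp d u w) = 0"
proof (cases "vnorm d u = 0")
  case True
  then have "\<forall>j<d. u j = 0"
    by (simp add: vnorm_eq_L2_set L2_set_eq_0_iff)
  then show ?thesis
    by (simp add: dotp_def)
next
  case False
  have "dotp d u (perp d u w) = (\<Sum>j<d. u j * w j - dotp d u w / (vnorm d u)^2 * (u j * u j))"
    unfolding dotp_def[of d u "perp d u w"] by (intro sum.cong) (auto simp: perp_def algebra_simps)
  also have "\<dots> = dotp d u w - dotp d u w / (vnorm d u)^2 * dotp d u u"
    by (simp add: dotp_def sum_subtractf sum_distrib_left)
  also have "\<dots> = 0"
    using False by (simp add: dotp_self)
  finally show ?thesis .
qed

lemma dotp_perp_perp: "dotp d (perp d u w) z = dotp d (perp d u w) (perp d u z)"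
proof -
  define p where "p = perp d u w"
  have "dotp d p (perp d u z) = (\<Sum>j<d. p j * z j - dotp d u z / (vnorm d u)^2 * (u j * p j))"
    unfolding dotp_def[of d p "perp d u z"] by (intro sum.cong) (auto simp: perp_def[of d u z] algebra_simps)
  also have "\<dots> = dotp d p z - dotp d u z / (vnorm d u)^2 * dotp d u p"
    by (simp add: dotp_def sum_subtractf sum_distrib_left)
  finally have "dotp d (perp d u w) (perp d u z)
      = dotp d (perp d u w) z - dotp d u z / (vnorm d u)^2 * dotp d u (perp d u w)"
    by (simp add: p_def)
  then show ?thesis
    by (simp add: dotp_perp_self)
qed

lemma vnorm_perp_le: "vnorm d (perp d u w) \<le> vnorm d w"
proof -
  have "vnorm d (perp d u w) * vnorm d (perp d u w) = dotp d (perp d u w) w"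
    by (simp add: dotp_perp_perp[of d u w w] dotp_self power2_eq_square)
  also have "\<dots> \<le> vnorm d (perp d u w) * vnorm d w"
    using abs_dotp_le by (rule abs_le_D1)
  finally show ?thesis
    using vnorm_nonneg[of d "perp d u w"] vnorm_nonneg[of d w]
    by (cases "vnorm d (perp d u w) = 0") (simp_all add: mult_le_cancel_left_pos)
qed

lemma sum_abs_le_sqrt_card: "(\<Sum>i<n. \<bar>e i\<bar>) \<le> sqrt (real n) * sqrt (\<Sum>i<n. (e i)^2)"
  using L2_set_mult_ineq[of "\<lambda>_. 1" e "{..<n}"] by (simp add: L2_set_def)

lemma vnorm_uminus: "vnorm d (\<lambda>j. - u j) = vnorm d u"
  by (simp add: vnorm_def)

lemma vnorm_displacement_le:
  fixes w w' :: "real \<Rightarrow> nat \<Rightarrow> real" and \<beta> \<beta>' :: "real \<Rightarrow> real"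
  assumes w: "\<And>s j. s \<in> {0..T} \<Longrightarrow> j < d \<Longrightarrow> ((\<lambda>s. w s j) has_real_derivative w' s j) (at s within {0..T})"
    and \<beta>: "\<And>s. s \<in> {0..T} \<Longrightarrow> (\<beta> has_real_derivative \<beta>' s) (at s within {0..T})"
    and speed: "\<And>s. s \<in> {0..T} \<Longrightarrow> vnorm d (w' s) \<le> \<beta>' s"
    and t: "t \<in> {0..T}"
  shows "vnorm d (\<lambda>j. w t j - w 0 j) \<le> \<beta> t - \<beta> 0"
proof -
  define \<delta> where "\<delta> = vnorm d (\<lambda>j. w t j - w 0 j)"
  text \<open>The unit direction of the displacement; when \<open>\<delta> = 0\<close> it degenerates to \<open>0\<close>
    (as \<open>1 / 0 = 0\<close>), which is still good enough.\<close>
  define u where "u = (\<lambda>j. (1 / \<delta>) * (w t j - w 0 j))"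
  have "vnorm d u = \<bar>1 / \<delta>\<bar> * \<delta>"
    unfolding u_def vnorm_scale by (simp add: \<delta>_def)
  then have "vnorm d u \<le> 1"
    by (cases "\<delta> = 0") simp_all
  have "dotp d u (\<lambda>j. w t j - w 0 j) = 1 / \<delta> * \<delta>^2"
    unfolding u_def dotp_scale_left dotp_self \<delta>_def ..
  then have "dotp d u (\<lambda>j. w t j - w 0 j) = \<delta>"
    by (cases "\<delta> = 0") (simp_all add: power2_eq_square)
  define \<Phi> where "\<Phi> s = dotp d u (\<lambda>j. w s j - w 0 j) - \<beta> s" for s
  have \<Phi>: "(\<Phi> has_real_derivative dotp d u (w' s) - \<beta>' s) (at s within {0..T})"
    if "s \<in> {0..T}" for s
    unfolding \<Phi>_def dotp_def by (auto intro!: derivative_eq_intros w \<beta> that simp: mult.commute)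
  have "\<Phi> t \<le> \<Phi> 0"
  proof (rule deriv_nonpos_off_countable_imp_le_start[OF t _ countable_empty])
    show "continuous_on {0..T} \<Phi>"
      using \<Phi> by (rule DERIV_continuous_on)
    fix s assume s: "s \<in> {0..T}"
    have "dotp d u (w' s) \<le> vnorm d u * vnorm d (w' s)"
      using abs_dotp_le abs_le_D1 by blast
    also have "\<dots> \<le> vnorm d (w' s)"
      by (rule mult_left_le_one_le[OF vnorm_nonneg vnorm_nonneg \<open>vnorm d u \<le> 1\<close>])
    finally show "\<exists>D \<le> 0. (\<Phi> has_real_derivative D) (at s within {0..T})"
      using \<Phi>[OF s] speed[OF s] by (intro exI[of _ "dotp d u (w' s) - \<beta>' s"]) simp
  qed
  then show ?thesis
    using \<open>dotp d u (\<lambda>j. w t j - w 0 j) = \<delta>\<close> by (simp add: \<Phi>_def \<delta>_def dotp_def)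
qed

section \<open>Quadratic forms and the smallest eigenvalue\<close>

definition mat_vec :: "nat \<Rightarrow> (nat \<Rightarrow> nat \<Rightarrow> real) \<Rightarrow> (nat \<Rightarrow> real) \<Rightarrow> nat \<Rightarrow> real" where
  "mat_vec n A u = (\<lambda>i. \<Sum>j<n. A i j * u j)"

definition quad_form :: "nat \<Rightarrow> (nat \<Rightarrow> nat \<Rightarrow> real) \<Rightarrow> (nat \<Rightarrow> real) \<Rightarrow> real" where
  "quad_form n A u = (\<Sum>i<n. \<Sum>j<n. u i * A i j * u j)"

lemma quad_form_eq_sum_mat_vec: "quad_form n A u = (\<Sum>i<n. u i * mat_vec n A u i)"
  unfolding quad_form_def mat_vec_def by (simp add: sum_distrib_left mult.assoc)

lemma quad_form_scale: "quad_form n A (\<lambda>i. a * u i) = a^2 * quad_form n A u"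
  unfolding quad_form_def by (simp add: sum_distrib_left power2_eq_square mult_ac)

lemma quad_form_shift_diagonal:
  "quad_form n (\<lambda>i j. A i j - (if i = j then \<mu> else 0)) u = quad_form n A u - \<mu> * (\<Sum>i<n. (u i)^2)"
proof -
  have "quad_form n (\<lambda>i j. A i j - (if i = j then \<mu> else 0)) u
      = (\<Sum>i<n. \<Sum>j<n. u i * A i j * u j - (if i = j then \<mu> * (u i)^2 else 0))"
    unfolding quad_form_def by (intro sum.cong refl) (auto simp: algebra_simps power2_eq_square)
  also have "\<dots> = quad_form n A u - \<mu> * (\<Sum>i<n. (u i)^2)"
    by (simp add: quad_form_def sum_subtractf sum_distrib_left sum.delta)
  finally show ?thesis .
qed

lemma quad_form_diff:
  assumes sym: "\<And>i j. i < n \<Longrightarrow> j < n \<Longrightarrow> A i j = A j i"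
  shows "quad_form n A (\<lambda>i. u i - s * z i)
    = quad_form n A u - 2 * s * (\<Sum>i<n. z i * mat_vec n A u i) + s^2 * quad_form n A z"
proof -
  have "(\<Sum>i<n. \<Sum>j<n. u i * A i j * z j) = (\<Sum>j<n. \<Sum>i<n. z j * (A j i * u i))"
    by (subst sum.swap) (intro sum.cong refl, simp add: sym mult_ac)
  then have cross: "(\<Sum>i<n. \<Sum>j<n. u i * A i j * z j) = (\<Sum>i<n. z i * mat_vec n A u i)"
    by (simp add: mat_vec_def sum_distrib_left)
  have cross': "(\<Sum>i<n. \<Sum>j<n. z i * A i j * u j) = (\<Sum>i<n. z i * mat_vec n A u i)"
    by (simp add: mat_vec_def sum_distrib_left mult_ac)
  have "quad_form n A (\<lambda>i. u i - s * z i) = (\<Sum>i<n. \<Sum>j<n. u i * A i j * u j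
      - s * (u i * A i j * z j) - s * (z i * A i j * u j) + s^2 * (z i * A i j * z j))"
    unfolding quad_form_def by (intro sum.cong refl) (simp add: algebra_simps power2_eq_square)
  also have "\<dots> = quad_form n A u - s * (\<Sum>i<n. \<Sum>j<n. u i * A i j * z j)
      - s * (\<Sum>i<n. \<Sum>j<n. z i * A i j * u j) + s^2 * quad_form n A z"
    unfolding quad_form_def by (simp add: sum.distrib sum_subtractf sum_distrib_left)
  finally show ?thesis
    unfolding cross cross' by simp
qed

lemma abs_quad_form_le:
  "\<bar>quad_form n A u\<bar> \<le> (\<Sum>i<n. \<Sum>j<n. \<bar>A i j\<bar>) * (\<Sum>i<n. (u i)^2)"
proof -
  have "\<bar>u i * u j\<bar> \<le> (\<Sum>i<n. (u i)^2)" if "i < n" "j < n" for i j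
  proof -
    have "2 * \<bar>u i * u j\<bar> \<le> (u i)^2 + (u j)^2"
      using sum_squares_bound[of "\<bar>u i\<bar>" "\<bar>u j\<bar>"] by (simp add: abs_mult power2_eq_square)
    also have "\<dots> \<le> 2 * (\<Sum>i<n. (u i)^2)"
      using member_le_sum[of i "{..<n}" "\<lambda>i. (u i)^2"] member_le_sum[of j "{..<n}" "\<lambda>i. (u i)^2"] that
      by simp
    finally show ?thesis by simp
  qed
  then have "\<bar>A i j\<bar> * \<bar>u i * u j\<bar> \<le> \<bar>A i j\<bar> * (\<Sum>i<n. (u i)^2)" if "i < n" "j < n" for i j
    using that by (intro mult_left_mono) auto
  then have "\<bar>u i * A i j * u j\<bar> \<le> \<bar>A i j\<bar> * (\<Sum>i<n. (u i)^2)" if "i < n" "j < n" for i j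
    using that by (simp add: abs_mult mult_ac)
  then have "(\<Sum>i<n. \<Sum>j<n. \<bar>u i * A i j * u j\<bar>) \<le> (\<Sum>i<n. \<Sum>j<n. \<bar>A i j\<bar> * (\<Sum>i<n. (u i)^2))"
    by (intro sum_mono) auto
  moreover have "\<bar>quad_form n A u\<bar> \<le> (\<Sum>i<n. \<Sum>j<n. \<bar>u i * A i j * u j\<bar>)"
    unfolding quad_form_def by (rule order_trans[OF sum_abs sum_mono]) (rule sum_abs)
  ultimately show ?thesis
    by (simp add: sum_distrib_right)
qed

lemma sum_sq_mat_vec_le:
  "(\<Sum>i<n. (mat_vec n B u i)^2) \<le> (\<Sum>i<n. \<Sum>j<n. (B i j)^2) * (\<Sum>j<n. (u j)^2)"
proof -
  have "(\<Sum>i<n. (mat_vec n B u i)^2) \<le> (\<Sum>i<n. (\<Sum>j<n. (B i j)^2) * (\<Sum>j<n. (u j)^2))"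
    unfolding mat_vec_def by (intro sum_mono Cauchy_Schwarz_ineq_sum)
  then show ?thesis
    by (simp add: sum_distrib_right)
qed

lemma psd_sum_sq_mat_vec_le:
  assumes sym: "\<And>i j. i < n \<Longrightarrow> j < n \<Longrightarrow> A i j = A j i"
    and psd: "\<And>w. quad_form n A w \<ge> 0"
  shows "(\<Sum>i<n. (mat_vec n A u i)^2) \<le> ((\<Sum>i<n. \<Sum>j<n. \<bar>A i j\<bar>) + 1) * quad_form n A u"
proof -
  define K where "K = (\<Sum>i<n. \<Sum>j<n. \<bar>A i j\<bar>) + 1"
  define z where "z = mat_vec n A u"
  have "K > 0"
    unfolding K_def by (intro add_nonneg_pos sum_nonneg) simp_all
  have "quad_form n A z \<le> (\<Sum>i<n. \<Sum>j<n. \<bar>A i j\<bar>) * (\<Sum>i<n. (z i)^2)"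
    using abs_quad_form_le[of n A z] by linarith
  moreover have "0 \<le> (\<Sum>i<n. (z i)^2)"
    by (simp add: sum_nonneg)
  ultimately have "quad_form n A z \<le> K * (\<Sum>i<n. (z i)^2)"
    unfolding K_def distrib_right by linarith
  text \<open>Evaluate the nonnegative form at \<open>u - z / K\<close>.\<close>
  have "0 \<le> quad_form n A (\<lambda>i. u i - (1 / K) * z i)"
    by (rule psd)
  also have "\<dots> = quad_form n A u - 2 * (1 / K) * (\<Sum>i<n. (z i)^2) + (1 / K)^2 * quad_form n A z"
    using quad_form_diff[OF sym, where u=u and s="1 / K" and z=z] by (simp add: z_def power2_eq_square)
  also have "\<dots> \<le> quad_form n A u - 2 * (1 / K) * (\<Sum>i<n. (z i)^2) + (1 / K)^2 * (K * (\<Sum>i<n. (z i)^2))"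
    using \<open>quad_form n A z \<le> K * (\<Sum>i<n. (z i)^2)\<close> by (intro add_left_mono mult_left_mono) auto
  also have "\<dots> = quad_form n A u - (1 / K) * (\<Sum>i<n. (z i)^2)"
    using \<open>K > 0\<close> by (simp add: power2_eq_square field_simps)
  finally show ?thesis
    using \<open>K > 0\<close> by (simp add: K_def z_def field_simps)
qed

lemma mat_mult_vec_eq_vec_mat_vec:
  "mat n n (\<lambda>(i, j). A i j) *\<^sub>v vec n u = vec n (mat_vec n A u)"
  by (rule eq_vecI) (auto simp: mat_vec_def scalar_prod_def lessThan_atLeast0)

lemma is_eigenvalue_iff_eigenvalue:
  "is_eigenvalue n A e \<longleftrightarrow> eigenvalue (mat n n (\<lambda>(i, j). A i j)) e"
proof
  assume "is_eigenvalue n A e"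
  then obtain u where u: "\<exists>i<n. u i \<noteq> 0" "\<forall>i<n. mat_vec n A u i = e * u i"
    by (auto simp: is_eigenvalue_def mat_vec_def)
  have "vec n u \<noteq> 0\<^sub>v n"
  proof
    assume "vec n u = 0\<^sub>v n"
    then have "\<forall>i<n. u i = 0"
      by (metis index_vec index_zero_vec(1))
    then show False
      using u(1) by blast
  qed
  moreover have "vec n (mat_vec n A u) = e \<cdot>\<^sub>v vec n u"
    using u(2) by (intro eq_vecI) auto
  ultimately show "eigenvalue (mat n n (\<lambda>(i, j). A i j)) e"
    unfolding eigenvalue_def eigenvector_def
    by (intro exI[of _ "vec n u"]) (simp add: mat_mult_vec_eq_vec_mat_vec)
next
  assume "eigenvalue (mat n n (\<lambda>(i, j). A i j)) e"
  then obtain v where v: "v \<in> carrier_vec n" "v \<noteq> 0\<^sub>v n"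
    and ev: "mat n n (\<lambda>(i, j). A i j) *\<^sub>v v = e \<cdot>\<^sub>v v"
    unfolding eigenvalue_def eigenvector_def by auto
  define u where "u i = v $ i" for i
  have v_eq: "v = vec n u"
    using v(1) by (auto simp: u_def)
  have "\<exists>i<n. u i \<noteq> 0"
  proof (rule ccontr)
    assume "\<not> (\<exists>i<n. u i \<noteq> 0)"
    then have "v = 0\<^sub>v n"
      unfolding v_eq by (intro eq_vecI) auto
    then show False
      using v(2) by contradiction
  qed
  moreover have "mat_vec n A u i = e * u i" if "i < n" for i
  proof -
    have "vec n (mat_vec n A u) = e \<cdot>\<^sub>v vec n u"
      using ev unfolding v_eq mat_mult_vec_eq_vec_mat_vec .
    then have "vec n (mat_vec n A u) $ i = (e \<cdot>\<^sub>v vec n u) $ i"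
      by (rule arg_cong)
    then show ?thesis
      using that by simp
  qed
  ultimately show "is_eigenvalue n A e"
    unfolding is_eigenvalue_def mat_vec_def by blast
qed

lemma finite_eigenvalues: "finite {e. is_eigenvalue n A e}"
proof -
  define M where "M = mat n n (\<lambda>(i, j). A i j)"
  have M: "M \<in> carrier_mat n n"
    by (simp add: M_def)
  have "{e. is_eigenvalue n A e} \<subseteq> {e. poly (char_poly M) e = 0}"
    using eigenvalue_root_char_poly[OF M] by (auto simp: is_eigenvalue_iff_eigenvalue M_def)
  moreover have "char_poly M \<noteq> 0"
    using degree_monic_char_poly[OF M] by auto
  ultimately show ?thesis
    by (rule finite_subset[OF _ poly_roots_finite])
qed

lemma exists_unit_vector:
  fixes n :: nat
  assumes "n > 0"
  shows "\<exists>w. (\<Sum>i<n. (w i)^2) = (1::real)"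
proof -
  have "(\<Sum>i<n. (if i = 0 then 1 else 0::real)^2) = (\<Sum>i<n. if i = 0 then 1 else 0)"
    by (rule sum.cong) simp_all
  also have "\<dots> = 1"
    using assms by (subst sum.delta) auto
  finally show ?thesis
    by (rule exI[of _ "\<lambda>i. if i = 0 then 1 else 0"])
qed

lemma Inf_unit_quad_form_le:
  assumes "n > 0"
  shows "Inf {quad_form n A w | w. (\<Sum>i<n. (w i)^2) = 1} * (\<Sum>i<n. (u i)^2) \<le> quad_form n A u"
proof (cases "(\<Sum>i<n. (u i)^2) = 0")
  case True
  then have "\<forall>i<n. u i = 0"
    by (simp add: sum_nonneg_eq_0_iff)
  then show ?thesis
    using True by (simp add: quad_form_def)
next
  case False
  define R where "R = {quad_form n A w | w. (\<Sum>i<n. (w i)^2) = 1}"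
  define a where "a = 1 / sqrt (\<Sum>i<n. (u i)^2)"
  have pos: "(\<Sum>i<n. (u i)^2) > 0"
    using False sum_nonneg[of "{..<n}" "\<lambda>i. (u i)^2"] by simp
  then have "a^2 = 1 / (\<Sum>i<n. (u i)^2)"
    by (simp add: a_def power_divide)
  then have "(\<Sum>i<n. (a * u i)^2) = 1"
    using pos by (simp add: power_mult_distrib sum_distrib_left[symmetric] sum_divide_distrib[symmetric])
  then have "quad_form n A (\<lambda>i. a * u i) \<in> R"
    unfolding R_def by blast
  moreover have "bdd_below R"
  proof (rule bdd_belowI)
    fix r assume "r \<in> R"
    then obtain w where "r = quad_form n A w" "(\<Sum>i<n. (w i)^2) = 1"
      by (auto simp: R_def)
    then show "- (\<Sum>i<n. \<Sum>j<n. \<bar>A i j\<bar>) \<le> r"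
      using abs_quad_form_le[of n A w] by (simp add: abs_le_iff)
  qed
  ultimately have "Inf R \<le> quad_form n A u / (\<Sum>i<n. (u i)^2)"
    using cInf_lower[of _ R] by (simp add: quad_form_scale \<open>a^2 = _\<close>)
  then show ?thesis
    using pos by (simp add: R_def field_simps)
qed

lemma psd_coercive_if_det_nonzero:
  assumes sym: "\<And>i j. i < n \<Longrightarrow> j < n \<Longrightarrow> N i j = N j i"
    and psd: "\<And>w. quad_form n N w \<ge> 0"
    and det: "det (mat n n (\<lambda>(i, j). N i j)) \<noteq> 0"
  obtains C where "C > 0" "\<And>w. (\<Sum>i<n. (w i)^2) \<le> C * quad_form n N w"
proof -
  define M where "M = mat n n (\<lambda>(i, j). N i j)"
  obtain B where B: "B \<in> carrier_mat n n" "B * M = 1\<^sub>m n"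
    using det_non_zero_imp_unit[of M n, OF _ det[folded M_def], of "()"]
    unfolding Units_def ring_mat_def M_def by auto
  define Bf where "Bf i j = B $$ (i, j)" for i j
  have "B = mat n n (\<lambda>(i, j). Bf i j)"
    using B(1) by (intro eq_matI) (auto simp: Bf_def)
  define FB where "FB = (\<Sum>i<n. \<Sum>j<n. (Bf i j)^2)"
  define K where "K = (\<Sum>i<n. \<Sum>j<n. \<bar>N i j\<bar>) + 1"
  have "FB \<ge> 0" "K > 0"
    unfolding FB_def K_def by (auto intro!: sum_nonneg add_nonneg_pos)
  show ?thesis
  proof (rule that)
    show "FB * K + 1 > 0"
      using \<open>FB \<ge> 0\<close> \<open>K > 0\<close> by (simp add: add_nonneg_pos)
    fix w
    text \<open>\<open>B\<close> undoes \<open>N\<close>, so \<open>w\<close> is controlled by \<open>N w\<close>, which positivity controls by the form.\<close>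
    have "vec n w = (B * M) *\<^sub>v vec n w"
      using B(2) by simp
    also have "\<dots> = B *\<^sub>v (M *\<^sub>v vec n w)"
      using B(1) by (intro assoc_mult_mat_vec) (auto simp: M_def)
    also have "\<dots> = vec n (mat_vec n Bf (mat_vec n N w))"
      unfolding M_def \<open>B = _\<close> by (simp add: mat_mult_vec_eq_vec_mat_vec)
    finally have "w i = mat_vec n Bf (mat_vec n N w) i" if "i < n" for i
      using arg_cong[where f="\<lambda>v. v $ i"] that by (metis index_vec)
    then have "(\<Sum>i<n. (w i)^2) = (\<Sum>i<n. (mat_vec n Bf (mat_vec n N w) i)^2)"
      by simp
    also have "\<dots> \<le> FB * (\<Sum>i<n. (mat_vec n N w i)^2)"
      unfolding FB_def by (rule sum_sq_mat_vec_le)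
    also have "\<dots> \<le> FB * (K * quad_form n N w)"
      using psd_sum_sq_mat_vec_le[OF sym psd] \<open>FB \<ge> 0\<close> by (simp add: K_def mult_left_mono)
    also have "\<dots> \<le> (FB * K + 1) * quad_form n N w"
      using psd[of w] by (simp add: distrib_right)
    finally show "(\<Sum>i<n. (w i)^2) \<le> (FB * K + 1) * quad_form n N w" .
  qed
qed

lemma exists_eigenvalue_le_quad_form:
  assumes "n > 0" and sym: "\<And>i j. i < n \<Longrightarrow> j < n \<Longrightarrow> A i j = A j i"
  obtains \<mu> where "is_eigenvalue n A \<mu>" "\<And>u. \<mu> * (\<Sum>i<n. (u i)^2) \<le> quad_form n A u"
proof -
  define \<mu> where "\<mu> = Inf {quad_form n A w | w. (\<Sum>i<n. (w i)^2) = 1}"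
  have low: "\<mu> * (\<Sum>i<n. (u i)^2) \<le> quad_form n A u" for u
    unfolding \<mu>_def using Inf_unit_quad_form_le[OF \<open>n > 0\<close>] .
  define N where "N i j = A i j - (if i = j then \<mu> else 0)" for i j
  have quad_N: "quad_form n N w = quad_form n A w - \<mu> * (\<Sum>i<n. (w i)^2)" for w
    unfolding N_def by (rule quad_form_shift_diagonal)
  text \<open>If \<open>A - \<mu> I\<close> were invertible, the form of \<open>A\<close> would exceed \<open>\<mu>\<close> by a fixed amount on the
    unit sphere, contradicting the choice of \<open>\<mu>\<close> as the infimum.\<close>
  have "det (mat n n (\<lambda>(i, j). N i j)) = 0"
  proof (rule ccontr)
    assume det_N: "det (mat n n (\<lambda>(i, j). N i j)) \<noteq> 0"
    have sym_N: "\<And>i j. i < n \<Longrightarrow> j < n \<Longrightarrow> N i j = N j i"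
      using sym by (simp add: N_def)
    have psd_N: "\<And>w. quad_form n N w \<ge> 0"
      using low by (simp add: quad_N)
    obtain C where "C > 0" and C: "\<And>w. (\<Sum>i<n. (w i)^2) \<le> C * quad_form n N w"
      using psd_coercive_if_det_nonzero[OF sym_N psd_N det_N] by blast
    have "\<mu> + 1 / C \<le> \<mu>"
      unfolding \<mu>_def
    proof (rule cInf_greatest)
      show "{quad_form n A w | w. (\<Sum>i<n. (w i)^2) = 1} \<noteq> {}"
        using exists_unit_vector[OF \<open>n > 0\<close>] by blast
      fix r assume "r \<in> {quad_form n A w | w. (\<Sum>i<n. (w i)^2) = 1}"
      then obtain w where "r = quad_form n A w" "(\<Sum>i<n. (w i)^2) = 1"
        by blast
      then show "Inf {quad_form n A w | w. (\<Sum>i<n. (w i)^2) = 1} + 1 / C \<le> r"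
        using C[of w] \<open>C > 0\<close> by (simp add: quad_N \<mu>_def field_simps)
    qed
    then show False
      using \<open>C > 0\<close> by simp
  qed
  moreover have "char_matrix (mat n n (\<lambda>(i, j). A i j)) \<mu> = mat n n (\<lambda>(i, j). N i j)"
    by (rule eq_matI) (auto simp: char_matrix_def N_def)
  ultimately have "eigenvalue (mat n n (\<lambda>(i, j). A i j)) \<mu>"
    by (simp add: eigenvalue_det[of _ n])
  then show ?thesis
    by (intro that[OF _ low]) (simp add: is_eigenvalue_iff_eigenvalue)
qed

lemma lambda_min_le_quad_form:
  assumes sym: "\<And>i j. i < n \<Longrightarrow> j < n \<Longrightarrow> A i j = A j i"
    and "\<theta> \<le> lambda_min n A"
  shows "\<theta> * (\<Sum>i<n. (u i)^2) \<le> quad_form n A u"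
proof (cases "n = 0")
  case True
  then show ?thesis
    by (simp add: quad_form_def)
next
  case False
  then have "n > 0"
    by simp
  then obtain \<mu> where "is_eigenvalue n A \<mu>" and \<mu>: "\<mu> * (\<Sum>i<n. (u i)^2) \<le> quad_form n A u"
    using exists_eigenvalue_le_quad_form sym by metis
  then have "lambda_min n A \<le> \<mu>"
    unfolding lambda_min_def by (intro Min_le finite_eigenvalues) simp
  then have "\<theta> \<le> \<mu>"
    using \<open>\<theta> \<le> lambda_min n A\<close> by simp
  then have "\<theta> * (\<Sum>i<n. (u i)^2) \<le> \<mu> * (\<Sum>i<n. (u i)^2)"
    by (intro mult_right_mono) (auto intro: sum_nonneg)
  then show ?thesis
    using \<mu> by linarith
qed

section \<open>The random initialization\<close>

lemma normal_density_le:
  assumes "\<sigma> > 0"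
  shows "normal_density \<mu> \<sigma> x \<le> 1 / (\<sigma> * sqrt (2 * pi))"
proof -
  have "normal_density \<mu> \<sigma> x = exp (- (x - \<mu>)\<^sup>2 / (2 * \<sigma>\<^sup>2)) / (\<sigma> * sqrt (2 * pi))"
    using assms by (simp add: normal_density_def real_sqrt_mult)
  also have "\<dots> \<le> 1 / (\<sigma> * sqrt (2 * pi))"
    using assms by (intro divide_right_mono) auto
  finally show ?thesis .
qed

lemma normal_prob_interval_le:
  assumes "\<sigma> > 0" and "r \<ge> 0"
  shows "measure (density lborel (normal_density 0 \<sigma>)) {-(\<sigma> * r)<..<\<sigma> * r} \<le> r"
proof -
  define c where "c = 1 / (\<sigma> * sqrt (2 * pi))"
  define I where "I = {-(\<sigma> * r)<..<\<sigma> * r}"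
  have "c \<ge> 0"
    using assms by (simp add: c_def)
  have "emeasure (density lborel (normal_density 0 \<sigma>)) I
      = (\<integral>\<^sup>+ x. ennreal (normal_density 0 \<sigma> x) * indicator I x \<partial>lborel)"
    by (subst emeasure_density) (auto simp: I_def)
  also have "\<dots> \<le> (\<integral>\<^sup>+ x. ennreal c * indicator I x \<partial>lborel)"
    using normal_density_le[OF \<open>\<sigma> > 0\<close>]
    by (intro nn_integral_mono mult_right_mono ennreal_leI) (auto simp: c_def)
  also have "\<dots> = ennreal (c * (2 * (\<sigma> * r)))"
    using assms \<open>c \<ge> 0\<close> by (simp add: nn_integral_cmult_indicator I_def ennreal_mult)
  also have "\<dots> \<le> ennreal r"
  proof (intro ennreal_leI)
    have "2 \<le> sqrt (2 * pi)"
      using pi_gt3 by (simp add: real_le_rsqrt)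
    then show "c * (2 * (\<sigma> * r)) \<le> r"
      using assms by (simp add: c_def field_simps mult_left_mono)
  qed
  finally show ?thesis
    using assms by (simp add: I_def measure_def enn2real_leI)
qed

lemma measure_PiM_small_box_le:
  assumes "\<sigma> > 0" and "r \<ge> 0"
  shows "measure (PiM {..<d} (\<lambda>_. density lborel (normal_density 0 \<sigma>)))
      (PiE {..<d} (\<lambda>_. {-(\<sigma> * r)<..<\<sigma> * r})) \<le> r ^ d"
proof -
  define N where "N = density lborel (normal_density 0 \<sigma>)"
  interpret N: prob_space N
    unfolding N_def using \<open>\<sigma> > 0\<close> by (rule prob_space_normal_density)
  interpret product_sigma_finite "\<lambda>_. N"
    by (simp add: product_sigma_finite_def N.sigma_finite_measure)
  have "emeasure (PiM {..<d} (\<lambda>_. N)) (PiE {..<d} (\<lambda>_. {-(\<sigma> * r)<..<\<sigma> * r}))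
      = (\<Prod>j<d. emeasure N {-(\<sigma> * r)<..<\<sigma> * r})"
    by (rule emeasure_PiM) (auto simp: N_def)
  also have "\<dots> = ennreal (measure N {-(\<sigma> * r)<..<\<sigma> * r} ^ d)"
    by (simp add: N.emeasure_eq_measure ennreal_power)
  finally have "measure (PiM {..<d} (\<lambda>_. N)) (PiE {..<d} (\<lambda>_. {-(\<sigma> * r)<..<\<sigma> * r}))
      = measure N {-(\<sigma> * r)<..<\<sigma> * r} ^ d"
    by (simp add: measure_def)
  also have "\<dots> \<le> r ^ d"
    using normal_prob_interval_le[OF assms] by (intro power_mono) (auto simp: N_def)
  finally show ?thesis
    by (simp add: N_def)
qed

lemma prob_row_in_small_box_le:
  fixes m d :: nat
  assumes "\<sigma> > 0" and "r \<ge> 0" and "k < m"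
  defines "M \<equiv> PiM {..<m} (\<lambda>_. PiM {..<d} (\<lambda>_. density lborel (normal_density 0 \<sigma>)))"
  shows "{V \<in> space M. \<forall>j<d. \<bar>V k j\<bar> < \<sigma> * r} \<in> sets M"
    and "measure M {V \<in> space M. \<forall>j<d. \<bar>V k j\<bar> < \<sigma> * r} \<le> r ^ d"
proof -
  define Mi where "Mi = PiM {..<d} (\<lambda>_. density lborel (normal_density 0 \<sigma>))"
  define Box where "Box = PiE {..<d} (\<lambda>_. {-(\<sigma> * r)<..<\<sigma> * r})"
  interpret Mi: prob_space Mi
    unfolding Mi_def using \<open>\<sigma> > 0\<close> by (intro prob_space_PiM prob_space_normal_density)
  have Box: "Box \<in> sets Mi"
    unfolding Box_def Mi_def by (intro sets_PiM_I_finite) auto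
  have "V k \<in> Box \<longleftrightarrow> (\<forall>j<d. \<bar>V k j\<bar> < \<sigma> * r)" if "V \<in> space M" for V
  proof -
    have "V k \<in> space Mi"
      using that \<open>k < m\<close> unfolding M_def Mi_def by (simp add: space_PiM PiE_iff)
    then have "V k \<in> extensional {..<d}"
      unfolding Mi_def by (simp add: space_PiM PiE_iff)
    then show ?thesis
      unfolding Box_def by (auto simp: PiE_iff abs_less_iff minus_less_iff)
  qed
  then have row_eq: "{V \<in> space M. \<forall>j<d. \<bar>V k j\<bar> < \<sigma> * r} = {V \<in> space M. V k \<in> Box}"
    by blast
  have "(\<lambda>V. V k) \<in> measurable M Mi"
    unfolding M_def Mi_def using \<open>k < m\<close> by (intro measurable_component_singleton) auto
  then have "(\<lambda>V. V k) -` Box \<inter> space M \<in> sets M"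
    using Box by (rule measurable_sets)
  then show "{V \<in> space M. \<forall>j<d. \<bar>V k j\<bar> < \<sigma> * r} \<in> sets M"
    unfolding row_eq by (simp add: Int_def conj_commute)
  have "emeasure M {V \<in> space M. V k \<in> Box} = emeasure Mi Box"
    unfolding M_def Mi_def using \<open>k < m\<close> Box[unfolded Mi_def]
    by (intro product_prob_space.emeasure_PiM_Collect_single product_prob_spaceI
        Mi.prob_space_axioms[unfolded Mi_def]) auto
  then show "measure M {V \<in> space M. \<forall>j<d. \<bar>V k j\<bar> < \<sigma> * r} \<le> r ^ d"
    using measure_PiM_small_box_le[OF assms(1,2), of d] unfolding row_eq
    by (simp add: measure_def Mi_def Box_def)
qed

lemma prob_all_rows_have_large_entry:
  fixes m d :: nat
  assumes "\<sigma> > 0" and "r \<ge> 0"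
  defines "M \<equiv> PiM {..<m} (\<lambda>_. PiM {..<d} (\<lambda>_. density lborel (normal_density 0 \<sigma>)))"
  defines "A \<equiv> {V \<in> space M. \<forall>k<m. \<exists>j<d. \<sigma> * r \<le> \<bar>V k j\<bar>}"
  shows "A \<in> sets M" and "measure M A \<ge> 1 - real m * r ^ d"
proof -
  define D where "D k = {V \<in> space M. \<forall>j<d. \<bar>V k j\<bar> < \<sigma> * r}" for k
  define Mi where "Mi = PiM {..<d} (\<lambda>_. density lborel (normal_density 0 \<sigma>))"
  interpret Mi: prob_space Mi
    unfolding Mi_def using \<open>\<sigma> > 0\<close> by (intro prob_space_PiM prob_space_normal_density)
  interpret M: prob_space M
    unfolding M_def Mi_def[symmetric] by (intro prob_space_PiM Mi.prob_space_axioms)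
  have D: "D k \<in> sets M" "measure M (D k) \<le> r ^ d" if k: "k < m" for k
    using prob_row_in_small_box_le[where \<sigma> = \<sigma> and r = r and k = k and m = m and d = d] assms(1,2) k
    unfolding D_def M_def by blast+
  have "A = space M - (\<Union>k<m. D k)"
    by (auto simp: A_def D_def not_less) (meson leD)
  moreover have "(\<Union>k<m. D k) \<in> sets M"
    using D by auto
  ultimately show "A \<in> sets M"
    by auto
  have "measure M (\<Union>k<m. D k) \<le> (\<Sum>k<m. measure M (D k))"
    using D by (intro M.finite_measure_subadditive_finite) auto
  also have "\<dots> \<le> real m * r ^ d"
    using D sum_mono[of "{..<m}" "\<lambda>k. measure M (D k)" "\<lambda>_. r ^ d"] by simp
  finally show "measure M A \<ge> 1 - real m * r ^ d"
    using M.prob_compl[OF \<open>(\<Union>k<m. D k) \<in> sets M\<close>] \<open>A = _\<close> by simp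
qed

lemma prob_signs_pm_one:
  fixes m :: nat
  defines "P \<equiv> PiM {..<m} (\<lambda>_. measure_pmf (pmf_of_set {-1, 1::real}))"
  shows "PiE {..<m} (\<lambda>_. {-1, 1}) \<in> sets P" and "measure P (PiE {..<m} (\<lambda>_. {-1, 1})) = 1"
proof -
  interpret product_sigma_finite "\<lambda>_. measure_pmf (pmf_of_set {-1, 1::real})"
    by (simp add: product_sigma_finite_def measure_pmf.sigma_finite_measure_axioms)
  show "PiE {..<m} (\<lambda>_. {-1, 1}) \<in> sets P"
    unfolding P_def by (intro sets_PiM_I_finite) auto
  have "emeasure P (PiE {..<m} (\<lambda>_. {-1, 1})) = (\<Prod>k<m. emeasure (measure_pmf (pmf_of_set {-1, 1::real})) {-1, 1})"
    unfolding P_def by (rule emeasure_PiM) auto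
  also have "\<dots> = 1"
    by (subst emeasure_pmf_of_set_space) auto
  finally show "measure P (PiE {..<m} (\<lambda>_. {-1, 1})) = 1"
    by (simp add: measure_def)
qed

lemma init_measure_event_large_entries:
  assumes "\<alpha> > 0" and "r \<ge> 0"
  obtains E where "E \<in> sets (init_measure m d \<alpha>)"
    and "measure (init_measure m d \<alpha>) E \<ge> 1 - real m * r ^ d"
    and "\<And>V c. (V, c) \<in> E \<Longrightarrow> (\<forall>k<m. c k \<in> {-1, 1}) \<and> (\<forall>k<m. \<exists>j<d. \<alpha> * r \<le> \<bar>V k j\<bar>)"
proof -
  define M where "M = PiM {..<m} (\<lambda>_. PiM {..<d} (\<lambda>_. density lborel (normal_density 0 \<alpha>)))"
  define P where "P = PiM {..<m} (\<lambda>_. measure_pmf (pmf_of_set {-1, 1::real}))"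
  define A where "A = {V \<in> space M. \<forall>k<m. \<exists>j<d. \<alpha> * r \<le> \<bar>V k j\<bar>}"
  define C where "C = PiE {..<m} (\<lambda>_. {-1, 1::real})"
  have A: "A \<in> sets M" "measure M A \<ge> 1 - real m * r ^ d"
    unfolding A_def M_def by (fact prob_all_rows_have_large_entry[OF assms])+
  have C: "C \<in> sets P" "measure P C = 1"
    unfolding C_def P_def by (fact prob_signs_pm_one)+
  interpret P: prob_space P
    unfolding P_def by (intro prob_space_PiM prob_space_measure_pmf)
  have init: "init_measure m d \<alpha> = M \<Otimes>\<^sub>M P"
    by (simp add: init_measure_def M_def P_def)
  show ?thesis
  proof (rule that[of "A \<times> C"])
    show "A \<times> C \<in> sets (init_measure m d \<alpha>)"
      unfolding init using A(1) C(1) by (rule pair_measureI)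
    have "emeasure (M \<Otimes>\<^sub>M P) (A \<times> C) = emeasure M A * emeasure P C"
      using A(1) C(1) by (rule P.emeasure_pair_measure_Times)
    then have "measure (M \<Otimes>\<^sub>M P) (A \<times> C) = measure M A * measure P C"
      by (simp add: measure_def enn2real_mult)
    then show "measure (init_measure m d \<alpha>) (A \<times> C) \<ge> 1 - real m * r ^ d"
      using A(2) C(2) init by simp
  next
    fix V c assume "(V, c) \<in> A \<times> C"
    then have "V \<in> A" "c \<in> C"
      by simp_all
    then show "(\<forall>k<m. c k \<in> {-1, 1}) \<and> (\<forall>k<m. \<exists>j<d. \<alpha> * r \<le> \<bar>V k j\<bar>)"
      unfolding A_def C_def by (simp add: PiE_iff)
  qed
qed

section \<open>Gradient flow of the weight-normalized network\<close>

lemma relu_mult_divide: "a \<ge> 0 \<Longrightarrow> r > 0 \<Longrightarrow> relu (a * h / r) = a * relu h / r"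
  unfolding relu_def
  by (cases "h \<ge> 0") (auto simp: max_def mult_nonneg_nonneg divide_nonneg_pos mult_le_0_iff divide_le_0_iff)

lemma dotp_grad_v:
  "dotp d z (\<lambda>j. grad_v n m d x y c G W k j)
    = (1 / sqrt m) * (\<Sum>i<n. (fnet m d c G W (x i) - y i) * c k * G k / vnorm d (W k)
        * ind (dotp d (W k) (x i) \<ge> 0) * dotp d z (perp d (W k) (x i)))"
proof -
  have "dotp d z (\<lambda>j. grad_v n m d x y c G W k j)
     = (\<Sum>j<d. \<Sum>i<n. (1 / sqrt m) * ((fnet m d c G W (x i) - y i) * c k * G k / vnorm d (W k)
        * ind (dotp d (W k) (x i) \<ge> 0)) * (z j * perp d (W k) (x i) j))"
    unfolding dotp_def grad_v_def by (simp add: sum_distrib_left mult_ac)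
  also have "\<dots> = (\<Sum>i<n. \<Sum>j<d. (1 / sqrt m) * ((fnet m d c G W (x i) - y i) * c k * G k / vnorm d (W k)
        * ind (dotp d (W k) (x i) \<ge> 0)) * (z j * perp d (W k) (x i) j))"
    by (rule sum.swap)
  also have "\<dots> = (1 / sqrt m) * (\<Sum>i<n. (fnet m d c G W (x i) - y i) * c k * G k / vnorm d (W k)
        * ind (dotp d (W k) (x i) \<ge> 0) * dotp d z (perp d (W k) (x i)))"
    unfolding dotp_def
    by (simp add: sum_distrib_left sum_distrib_right mult_ac divide_divide_eq_left sum_divide_distrib)
  finally show ?thesis .
qed

lemma vnorm_grad_v_le:
  assumes "\<And>i. i < n \<Longrightarrow> vnorm d (x i) \<le> 1"
  shows "vnorm d (\<lambda>j. grad_v n m d x y c G W k j)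
    \<le> (1 / sqrt m) * (\<bar>c k * G k / vnorm d (W k)\<bar> * (\<Sum>i<n. \<bar>fnet m d c G W (x i) - y i\<bar>))"
proof -
  define a where "a i = (fnet m d c G W (x i) - y i) * c k * G k / vnorm d (W k)
    * ind (dotp d (W k) (x i) \<ge> 0)" for i
  define p where "p i = perp d (W k) (x i)" for i
  have "vnorm d (\<lambda>j. \<Sum>i<n. a i * p i j) \<le> (\<Sum>i<n. vnorm d (\<lambda>j. a i * p i j))"
    by (rule vnorm_sum_le) simp
  also have "\<dots> \<le> (\<Sum>i<n. \<bar>c k * G k / vnorm d (W k)\<bar> * \<bar>fnet m d c G W (x i) - y i\<bar>)"
  proof (rule sum_mono)
    fix i assume "i \<in> {..<n}"
    then have "vnorm d (p i) \<le> 1"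
      using vnorm_perp_le[of d "W k" "x i"] assms[of i] unfolding p_def by simp
    moreover have "\<bar>a i\<bar> \<le> \<bar>c k * G k / vnorm d (W k)\<bar> * \<bar>fnet m d c G W (x i) - y i\<bar>"
      by (simp add: a_def ind_def abs_mult mult_ac)
    moreover have "\<bar>a i\<bar> * vnorm d (p i) \<le> \<bar>a i\<bar>"
      using \<open>vnorm d (p i) \<le> 1\<close> by (simp add: mult_left_le)
    ultimately show "vnorm d (\<lambda>j. a i * p i j) \<le> \<bar>c k * G k / vnorm d (W k)\<bar> * \<bar>fnet m d c G W (x i) - y i\<bar>"
      unfolding vnorm_scale by linarith
  qed
  finally have bound: "vnorm d (\<lambda>j. \<Sum>i<n. a i * p i j)
      \<le> \<bar>c k * G k / vnorm d (W k)\<bar> * (\<Sum>i<n. \<bar>fnet m d c G W (x i) - y i\<bar>)"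
    by (simp add: sum_distrib_left)
  have grad: "(\<lambda>j. grad_v n m d x y c G W k j) = (\<lambda>j. (1 / sqrt m) * (\<Sum>i<n. a i * p i j))"
    by (simp add: grad_v_def a_def p_def)
  have vnorm_grad: "vnorm d (\<lambda>j. grad_v n m d x y c G W k j)
      = (1 / sqrt m) * vnorm d (\<lambda>j. \<Sum>i<n. a i * p i j)"
    unfolding grad vnorm_scale by simp
  show ?thesis
    unfolding vnorm_grad by (rule mult_left_mono[OF bound]) simp
qed

text \<open>With \<open>a\<close>, \<open>b\<close> and \<open>P\<close> the features and perpendicular Gram entries below, this is the chain rule
  computation behind \<open>f' = -(G + V/\<alpha>\<^sup>2)(f - y)\<close>.\<close>
lemma gradient_flow_kernel_identity:
  fixes a b :: "nat \<Rightarrow> nat \<Rightarrow> real" and P :: "nat \<Rightarrow> nat \<Rightarrow> nat \<Rightarrow> real" and e :: "nat \<Rightarrow> real"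
  assumes P_sym: "\<And>i j k. P i j k = P j i k"
  shows "s * (\<Sum>k<m. a i k * (- s * (\<Sum>j<n. e j * a j k)) + b i k * (- s * (\<Sum>j<n. e j * b j k * P j i k)))
    = - (\<Sum>j<n. s^2 * (\<Sum>k<m. a i k * a j k + b i k * b j k * P i j k) * e j)"
proof -
  have "s * (a i k * (- s * (\<Sum>j<n. e j * a j k)) + b i k * (- s * (\<Sum>j<n. e j * b j k * P j i k)))
      = (\<Sum>j<n. - (s^2 * (a i k * a j k + b i k * b j k * P i j k) * e j))" for k
  proof -
    have "s * (a i k * (- s * (\<Sum>j<n. e j * a j k)) + b i k * (- s * (\<Sum>j<n. e j * b j k * P j i k)))
        = - (s^2) * (a i k * (\<Sum>j<n. e j * a j k) + b i k * (\<Sum>j<n. e j * b j k * P j i k))"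
      by (simp add: algebra_simps power2_eq_square)
    also have "\<dots> = - (s^2) * (\<Sum>j<n. e j * (a i k * a j k + b i k * b j k * P i j k))"
      by (simp add: sum_distrib_left sum.distrib[symmetric] P_sym algebra_simps)
    also have "\<dots> = (\<Sum>j<n. - (s^2 * (a i k * a j k + b i k * b j k * P i j k) * e j))"
      by (simp add: sum_distrib_left sum_negf algebra_simps)
    finally show ?thesis .
  qed
  then have "s * (\<Sum>k<m. a i k * (- s * (\<Sum>j<n. e j * a j k)) + b i k * (- s * (\<Sum>j<n. e j * b j k * P j i k)))
      = (\<Sum>k<m. \<Sum>j<n. - (s^2 * (a i k * a j k + b i k * b j k * P i j k) * e j))"
    by (simp add: sum_distrib_left)
  also have "\<dots> = - (\<Sum>j<n. s^2 * (\<Sum>k<m. a i k * a j k + b i k * b j k * P i j k) * e j)"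
    by (subst sum.swap) (simp add: sum_negf sum_distrib_left sum_distrib_right)
  finally show ?thesis .
qed

locale relu_flow =
  fixes n m d :: nat and x :: "nat \<Rightarrow> nat \<Rightarrow> real" and y :: "nat \<Rightarrow> real" and \<alpha> T :: real
    and V :: "nat \<Rightarrow> nat \<Rightarrow> real" and c :: "nat \<Rightarrow> real"
    and v :: "real \<Rightarrow> nat \<Rightarrow> nat \<Rightarrow> real" and g :: "real \<Rightarrow> nat \<Rightarrow> real"
  assumes \<alpha>_pos: "\<alpha> > 0"
    and signs: "\<forall>k<m. c k \<in> {-1, 1}"
    and init_nonzero: "\<forall>k<m. vnorm d (V k) > 0"
    and flow: "grad_flow n m d x y \<alpha> T V c v g"
    and scale_near_init: "\<forall>t\<in>{0..T}. \<forall>k<m. \<bar>g t k - g 0 k\<bar> \<le> g 0 k"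
begin

abbreviation \<rho> :: "nat \<Rightarrow> real" where
  "\<rho> k \<equiv> vnorm d (V k)"

lemma init_norm_pos: "k < m \<Longrightarrow> \<rho> k > 0"
  using init_nonzero by simp

lemma sign_square: "k < m \<Longrightarrow> c k * c k = 1"
  using signs by auto

lemma abs_sign: "k < m \<Longrightarrow> \<bar>c k\<bar> = 1"
  using signs by auto

lemma v_init: "k < m \<Longrightarrow> j < d \<Longrightarrow> v 0 k j = V k j"
  using flow by (simp add: grad_flow_def)

lemma g_init: "k < m \<Longrightarrow> g 0 k = \<rho> k / \<alpha>"
  using flow by (simp add: grad_flow_def)

lemma v_has_derivative:
  "t \<in> {0..T} \<Longrightarrow> k < m \<Longrightarrow> j < d \<Longrightarrow>
    ((\<lambda>s. v s k j) has_real_derivative - grad_v n m d x y c (g t) (v t) k j) (at t within {0..T})"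
  using flow by (simp add: grad_flow_def)

lemma g_has_derivative:
  "t \<in> {0..T} \<Longrightarrow> k < m \<Longrightarrow>
    ((\<lambda>s. g s k) has_real_derivative - grad_g n m d x y c (g t) (v t) k) (at t within {0..T})"
  using flow by (simp add: grad_flow_def)

text \<open>The gradient in \<open>v\<^sub>k\<close> is orthogonal to \<open>v\<^sub>k\<close>, so the flow preserves \<open>\<parallel>v\<^sub>k\<parallel>\<close>.\<close>
lemma vnorm_v_const:
  assumes k: "k < m" and t: "t \<in> {0..T}"
  shows "vnorm d (v t k) = \<rho> k"
proof -
  define \<psi> where "\<psi> s = (\<Sum>j<d. (v s k j)^2)" for s
  have "(\<psi> has_real_derivative 0) (at s within {0..T})" if s: "s \<in> {0..T}" for s
  proof -
    have "(\<psi> has_real_derivative (\<Sum>j<d. 2 * v s k j * - grad_v n m d x y c (g s) (v s) k j))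
        (at s within {0..T})"
      unfolding \<psi>_def
      by (intro DERIV_sum) (auto intro!: derivative_eq_intros v_has_derivative[OF s k] simp: power2_eq_square)
    moreover have "(\<Sum>j<d. 2 * v s k j * - grad_v n m d x y c (g s) (v s) k j)
        = - 2 * dotp d (v s k) (\<lambda>j. grad_v n m d x y c (g s) (v s) k j)"
      by (simp add: dotp_def sum_distrib_left sum_negf mult.assoc)
    moreover have "dotp d (v s k) (\<lambda>j. grad_v n m d x y c (g s) (v s) k j) = 0"
      unfolding dotp_grad_v by (simp add: dotp_perp_self)
    ultimately show ?thesis
      by simp
  qed
  then obtain C where "\<forall>s\<in>{0..T}. \<psi> s = C"
    using has_field_derivative_zero_constant[of "{0..T}" \<psi>] by auto
  then have "\<psi> t = \<psi> 0"
    using t by auto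
  then show ?thesis
    using v_init[OF k] by (simp add: \<psi>_def vnorm_def)
qed

lemma scale_bounds:
  assumes "k < m" and "t \<in> {0..T}"
  shows "0 \<le> g t k" and "g t k \<le> 2 * \<rho> k / \<alpha>"
  using scale_near_init assms g_init[OF \<open>k < m\<close>] by (fastforce simp: abs_le_iff)+

lemma fnet_eq:
  assumes "t \<in> {0..T}"
  shows "fnet m d c (g t) (v t) z = (1 / sqrt m) * (\<Sum>k<m. c k * (g t k * relu (dotp d (v t k) z) / \<rho> k))"
  unfolding fnet_def using assms init_nonzero
  by (intro arg_cong2[where f="(*)"] refl sum.cong) (simp add: vnorm_v_const relu_mult_divide scale_bounds)

definition resid :: "nat \<Rightarrow> real \<Rightarrow> real" where
  "resid i t = fnet m d c (g t) (v t) (x i) - y i"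

definition preact :: "nat \<Rightarrow> nat \<Rightarrow> real \<Rightarrow> real" where
  "preact i k t = dotp d (v t k) (x i)"

text \<open>\<open>\<partial>f(x\<^sub>i)/\<partial>g\<^sub>k = feature_g t i k / \<surd>m\<close> and
  \<open>\<partial>f(x\<^sub>i)/\<partial>v\<^sub>k = feature_v t i k \<cdot> perp (v\<^sub>k) x\<^sub>i / \<surd>m\<close>.\<close>
definition feature_g :: "real \<Rightarrow> nat \<Rightarrow> nat \<Rightarrow> real" where
  "feature_g t i k = c k * relu (preact i k t) / \<rho> k"

definition feature_v :: "real \<Rightarrow> nat \<Rightarrow> nat \<Rightarrow> real" where
  "feature_v t i k = c k * g t k * ind (preact i k t \<ge> 0) / \<rho> k"

definition perp_gram :: "real \<Rightarrow> nat \<Rightarrow> nat \<Rightarrow> nat \<Rightarrow> real" where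
  "perp_gram t i j k = dotp d (perp d (v t k) (x i)) (perp d (v t k) (x j))"

definition kernel :: "real \<Rightarrow> nat \<Rightarrow> nat \<Rightarrow> real" where
  "kernel t i j = Gmat m d x (v t) i j + (1 / \<alpha>^2) * Vmat m d \<alpha> x c (g t) (v t) i j"

definition scale_rate :: "nat \<Rightarrow> real \<Rightarrow> real" where
  "scale_rate k t = - (1 / sqrt m) * (\<Sum>j<n. resid j t * feature_g t j k)"

definition preact_rate :: "nat \<Rightarrow> nat \<Rightarrow> real \<Rightarrow> real" where
  "preact_rate i k t = - (1 / sqrt m) * (\<Sum>j<n. resid j t * feature_v t j k * perp_gram t j i k)"

definition kinks :: "real set" where
  "kinks = {t \<in> {0..T}. \<exists>i<n. \<exists>k<m. preact i k t = 0 \<and> preact_rate i k t \<noteq> 0}"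

lemma perp_gram_commute: "perp_gram t i j k = perp_gram t j i k"
  unfolding perp_gram_def by (rule dotp_commute)

lemma scale_has_derivative:
  assumes "t \<in> {0..T}" and "k < m"
  shows "((\<lambda>s. g s k) has_real_derivative scale_rate k t) (at t within {0..T})"
proof -
  have "- grad_g n m d x y c (g t) (v t) k = scale_rate k t"
    unfolding grad_g_def scale_rate_def resid_def feature_g_def preact_def
    using assms by (simp add: vnorm_v_const sum_distrib_left mult_ac sum_negf)
  then show ?thesis
    using g_has_derivative[OF assms] by simp
qed

lemma preact_has_derivative:
  assumes "t \<in> {0..T}" and "k < m"
  shows "((\<lambda>s. preact i k s) has_real_derivative preact_rate i k t) (at t within {0..T})"
proof -
  have "((\<lambda>s. preact i k s) has_real_derivative
      dotp d (\<lambda>j. - grad_v n m d x y c (g t) (v t) k j) (x i)) (at t within {0..T})"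
    unfolding preact_def dotp_def
    by (intro DERIV_sum) (auto intro!: derivative_eq_intros v_has_derivative[OF assms])
  moreover have "dotp d (\<lambda>j. - grad_v n m d x y c (g t) (v t) k j) (x i) = preact_rate i k t"
  proof -
    have "dotp d (\<lambda>j. - grad_v n m d x y c (g t) (v t) k j) (x i)
        = - dotp d (x i) (\<lambda>j. grad_v n m d x y c (g t) (v t) k j)"
      by (simp add: dotp_def sum_negf mult.commute)
    also have "\<dots> = preact_rate i k t"
      unfolding dotp_grad_v preact_rate_def
      using assms by (simp add: resid_def feature_v_def perp_gram_def preact_def vnorm_v_const
          dotp_commute[of d "x i"] dotp_perp_perp[of d "v t k" _ "x i"] mult_ac)
    finally show ?thesis .
  qed
  ultimately show ?thesis
    by simp
qed

lemma kernel_eq: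
  assumes "t \<in> {0..T}"
  shows "kernel t i j = (1 / sqrt m)^2
    * (\<Sum>k<m. feature_g t i k * feature_g t j k + feature_v t i k * feature_v t j k * perp_gram t i j k)"
proof -
  have "kernel t i j = (1 / real m) * (\<Sum>k<m. relu (dotp d (v t k) (x i)) * relu (dotp d (v t k) (x j))
      / (vnorm d (v t k))^2 + (1 / \<alpha>^2) * ((\<alpha> * c k * g t k / vnorm d (v t k))^2
      * dotp d (perp d (v t k) (x i)) (perp d (v t k) (x j))
      * ind (dotp d (v t k) (x i) \<ge> 0) * ind (dotp d (v t k) (x j) \<ge> 0)))"
    unfolding kernel_def Gmat_def Vmat_def by (simp add: sum.distrib sum_distrib_left algebra_simps)
  also have "\<dots> = (1 / real m)
      * (\<Sum>k<m. feature_g t i k * feature_g t j k + feature_v t i k * feature_v t j k * perp_gram t i j k)"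
  proof (intro arg_cong2[where f="(*)"] refl sum.cong)
    fix k assume "k \<in> {..<m}"
    then have "k < m" by simp
    then show "relu (dotp d (v t k) (x i)) * relu (dotp d (v t k) (x j)) / (vnorm d (v t k))^2
      + (1 / \<alpha>^2) * ((\<alpha> * c k * g t k / vnorm d (v t k))^2
      * dotp d (perp d (v t k) (x i)) (perp d (v t k) (x j))
      * ind (dotp d (v t k) (x i) \<ge> 0) * ind (dotp d (v t k) (x j) \<ge> 0))
      = feature_g t i k * feature_g t j k + feature_v t i k * feature_v t j k * perp_gram t i j k"
      unfolding feature_g_def feature_v_def perp_gram_def preact_def vnorm_v_const[OF \<open>k < m\<close> assms]
      using init_nonzero \<alpha>_pos sign_square[OF \<open>k < m\<close>] by (simp add: field_simps power2_eq_square)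
  qed
  also have "1 / real m = (1 / sqrt m)^2"
    by (simp add: power_divide)
  finally show ?thesis .
qed

lemma kernel_symmetric: "t \<in> {0..T} \<Longrightarrow> kernel t i j = kernel t j i"
  unfolding kernel_eq by (simp add: perp_gram_commute mult.commute)

lemma resid_eq:
  assumes "t \<in> {0..T}"
  shows "resid i t = (1 / sqrt m) * (\<Sum>k<m. c k * (g t k * relu (preact i k t) / \<rho> k)) - y i"
  unfolding resid_def preact_def fnet_eq[OF assms] ..

lemma continuous_on_resid: "continuous_on {0..T} (\<lambda>s. resid i s)"
proof -
  have "continuous_on {0..T} (\<lambda>s. (1 / sqrt m) * (\<Sum>k<m. c k * (g s k * relu (preact i k s) / \<rho> k)) - y i)"
    unfolding preact_def dotp_def relu_def
    by (intro continuous_intros DERIV_continuous_on[OF v_has_derivative] DERIV_continuous_on[OF g_has_derivative])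
      (auto dest!: init_norm_pos)
  then show ?thesis
    by (rule continuous_on_cong[THEN iffD1, rotated 2]) (simp_all add: resid_eq)
qed

lemma countable_kinks: "countable kinks"
proof -
  have "kinks = (\<Union>i<n. \<Union>k<m. {t \<in> {0..T}. preact i k t = 0 \<and> preact_rate i k t \<noteq> 0})"
    unfolding kinks_def by blast
  moreover have "countable {t \<in> {0..T}. preact i k t = 0 \<and> preact_rate i k t \<noteq> 0}" if "k < m" for i k
    using preact_has_derivative that by (intro countable_zeros_with_nonzero_derivative) auto
  ultimately show ?thesis
    by (auto intro!: countable_UN[OF countable_finite[OF finite_lessThan]])
qed

lemma resid_has_derivative:
  assumes t: "t \<in> {0..T}" "t \<notin> kinks" and "i < n"
  shows "((\<lambda>s. resid i s) has_real_derivative - mat_vec n (kernel t) (\<lambda>j. resid j t) i) (at t within {0..T})"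
proof -
  have summand: "((\<lambda>s. c k * (g s k * relu (preact i k s) / \<rho> k)) has_real_derivative
      feature_g t i k * scale_rate k t + feature_v t i k * preact_rate i k t) (at t within {0..T})"
    if "k \<in> {..<m}" for k
  proof -
    have "k < m"
      using that by simp
    then have "((\<lambda>s. relu (preact i k s)) has_real_derivative ind (preact i k t \<ge> 0) * preact_rate i k t)
        (at t within {0..T})"
      using t \<open>i < n\<close> by (intro has_real_derivative_relu preact_has_derivative) (auto simp: kinks_def)
    then have "((\<lambda>s. c k * (g s k * relu (preact i k s) / \<rho> k)) has_real_derivative
        c k * ((scale_rate k t * relu (preact i k t)
          + ind (preact i k t \<ge> 0) * preact_rate i k t * g t k) / \<rho> k)) (at t within {0..T})"
      by (intro DERIV_cmult DERIV_cdivide DERIV_mult scale_has_derivative[OF t(1) \<open>k < m\<close>])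
    then show ?thesis
      by (simp add: feature_g_def feature_v_def algebra_simps add_divide_distrib)
  qed
  have "((\<lambda>s. (1 / sqrt m) * (\<Sum>k<m. c k * (g s k * relu (preact i k s) / \<rho> k)) - y i) has_real_derivative
      (1 / sqrt m) * (\<Sum>k<m. feature_g t i k * scale_rate k t + feature_v t i k * preact_rate i k t) - 0)
      (at t within {0..T})"
    by (intro DERIV_diff DERIV_cmult DERIV_sum DERIV_const summand)
  also have "(1 / sqrt m) * (\<Sum>k<m. feature_g t i k * scale_rate k t + feature_v t i k * preact_rate i k t) - 0
      = - (\<Sum>j<n. (1 / sqrt m)^2 * (\<Sum>k<m. feature_g t i k * feature_g t j k
          + feature_v t i k * feature_v t j k * perp_gram t i j k) * resid j t)"
    unfolding diff_zero scale_rate_def preact_rate_def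
    by (rule gradient_flow_kernel_identity) (rule perp_gram_commute)
  also have "\<dots> = - mat_vec n (kernel t) (\<lambda>j. resid j t) i"
    by (simp add: mat_vec_def kernel_eq[OF t(1)])
  finally have deriv: "((\<lambda>s. (1 / sqrt m) * (\<Sum>k<m. c k * (g s k * relu (preact i k s) / \<rho> k)) - y i)
      has_real_derivative - mat_vec n (kernel t) (\<lambda>j. resid j t) i) (at t within {0..T})" .
  have ev: "\<forall>\<^sub>F s in at t within {0..T}.
      resid i s = (1 / sqrt m) * (\<Sum>k<m. c k * (g s k * relu (preact i k s) / \<rho> k)) - y i"
    unfolding eventually_at_filter by (intro always_eventually) (auto simp: resid_eq)
  show ?thesis
    using deriv has_field_derivative_cong_eventually[OF ev resid_eq[OF t(1)]] by simp
qed

end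

locale relu_flow_spectral = relu_flow +
  fixes \<omega> :: real
  assumes \<omega>_pos: "\<omega> > 0"
    and inputs_bounded: "\<forall>i<n. vnorm d (x i) \<le> 1"
    and kernel_spectrum: "\<forall>t\<in>{0..T}. lambda_min n (\<lambda>i i'. Gmat m d x (v t) i i'
      + (1 / \<alpha>^2) * Vmat m d \<alpha> x c (g t) (v t) i i') \<ge> \<omega> / 2"
begin

lemma quad_form_kernel_ge:
  assumes "t \<in> {0..T}"
  shows "\<omega> / 2 * (\<Sum>i<n. (u i)^2) \<le> quad_form n (kernel t) u"
proof (rule lambda_min_le_quad_form)
  show "\<And>i j. i < n \<Longrightarrow> j < n \<Longrightarrow> kernel t i j = kernel t j i"
    using kernel_symmetric[OF assms] .
  show "\<omega> / 2 \<le> lambda_min n (kernel t)"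
    using kernel_spectrum assms by (simp add: kernel_def[abs_def])
qed

lemma residual_decay:
  assumes t: "t \<in> {0..T}"
  shows "(\<Sum>i<n. (resid i t)^2) \<le> exp (- \<omega> * t) * (\<Sum>i<n. (resid i 0)^2)"
proof -
  define \<phi> where "\<phi> s = (\<Sum>i<n. (resid i s)^2)" for s
  define \<psi> where "\<psi> s = exp (\<omega> * s) * \<phi> s" for s
  have "\<psi> t \<le> \<psi> 0"
  proof (rule deriv_nonpos_off_countable_imp_le_start[OF t _ countable_kinks])
    show "continuous_on {0..T} \<psi>"
      unfolding \<psi>_def \<phi>_def by (intro continuous_intros continuous_on_resid)
    fix s assume s: "s \<in> {0..T}" "s \<notin> kinks"
    have "(\<phi> has_real_derivative (\<Sum>i<n. 2 * resid i s * - mat_vec n (kernel s) (\<lambda>j. resid j s) i))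
        (at s within {0..T})"
      unfolding \<phi>_def
      by (intro DERIV_sum) (auto intro!: derivative_eq_intros resid_has_derivative[OF s] simp: power2_eq_square)
    moreover have "(\<Sum>i<n. 2 * resid i s * - mat_vec n (kernel s) (\<lambda>j. resid j s) i)
        = - 2 * quad_form n (kernel s) (\<lambda>j. resid j s)"
      by (simp add: quad_form_eq_sum_mat_vec sum_distrib_left sum_negf mult.assoc)
    ultimately have "(\<psi> has_real_derivative
        exp (\<omega> * s) * (\<omega> * \<phi> s - 2 * quad_form n (kernel s) (\<lambda>j. resid j s))) (at s within {0..T})"
      unfolding \<psi>_def by (auto intro!: derivative_eq_intros simp: algebra_simps)
    moreover have "\<omega> * \<phi> s - 2 * quad_form n (kernel s) (\<lambda>j. resid j s) \<le> 0"
      using quad_form_kernel_ge[OF s(1), of "\<lambda>j. resid j s"] by (simp add: \<phi>_def)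
    ultimately show "\<exists>D \<le> 0. (\<psi> has_real_derivative D) (at s within {0..T})"
      by (intro exI[of _ "exp (\<omega> * s) * (\<omega> * \<phi> s - 2 * quad_form n (kernel s) (\<lambda>j. resid j s))"])
        (simp add: mult_nonneg_nonpos)
  qed
  then have "\<phi> t \<le> \<phi> 0 / exp (\<omega> * t)"
    by (simp add: \<psi>_def field_simps)
  then show ?thesis
    by (simp add: \<phi>_def exp_minus field_simps)
qed

lemma vnorm_v_speed_le:
  assumes t: "t \<in> {0..T}" and k: "k < m"
  shows "vnorm d (\<lambda>j. - grad_v n m d x y c (g t) (v t) k j)
    \<le> 2 * sqrt n / (\<alpha> * sqrt m) * exp (- \<omega> * t / 2) * sqrt (\<Sum>i<n. (resid i 0)^2)"
proof -
  have "\<bar>c k * g t k / vnorm d (v t k)\<bar> \<le> 2 / \<alpha>"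
    using scale_bounds[OF k t] init_norm_pos[OF k] abs_sign[OF k] \<alpha>_pos
    by (simp add: vnorm_v_const[OF k t] abs_mult field_simps)
  moreover have "(\<Sum>i<n. \<bar>resid i t\<bar>) \<le> sqrt n * (exp (- \<omega> * t / 2) * sqrt (\<Sum>i<n. (resid i 0)^2))"
  proof -
    have "exp (- \<omega> * t) = (exp (- \<omega> * t / 2))^2"
      by (simp add: power2_eq_square flip: exp_add)
    then have "sqrt (\<Sum>i<n. (resid i t)^2) \<le> exp (- \<omega> * t / 2) * sqrt (\<Sum>i<n. (resid i 0)^2)"
      using real_sqrt_le_mono[OF residual_decay[OF t]] by (simp add: real_sqrt_mult)
    then show ?thesis
      using sum_abs_le_sqrt_card[of "\<lambda>i. resid i t" n] by (meson mult_left_mono order_trans real_sqrt_ge_zero of_nat_0_le_iff)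
  qed
  ultimately have "\<bar>c k * g t k / vnorm d (v t k)\<bar> * (\<Sum>i<n. \<bar>resid i t\<bar>)
      \<le> 2 / \<alpha> * (sqrt n * (exp (- \<omega> * t / 2) * sqrt (\<Sum>i<n. (resid i 0)^2)))"
    using \<alpha>_pos by (intro mult_mono) (auto intro: sum_nonneg)
  then have "(1 / sqrt m) * (\<bar>c k * g t k / vnorm d (v t k)\<bar> * (\<Sum>i<n. \<bar>resid i t\<bar>))
      \<le> (1 / sqrt m) * (2 / \<alpha> * (sqrt n * (exp (- \<omega> * t / 2) * sqrt (\<Sum>i<n. (resid i 0)^2))))"
    by (rule mult_left_mono) simp
  moreover have "vnorm d (\<lambda>j. grad_v n m d x y c (g t) (v t) k j)
      \<le> (1 / sqrt m) * (\<bar>c k * g t k / vnorm d (v t k)\<bar> * (\<Sum>i<n. \<bar>resid i t\<bar>))"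
    using vnorm_grad_v_le[of n d x m y c "g t" "v t" k] inputs_bounded by (simp add: resid_def)
  moreover have "(1 / sqrt m) * (2 / \<alpha> * (sqrt n * (exp (- \<omega> * t / 2) * sqrt (\<Sum>i<n. (resid i 0)^2))))
      = 2 * sqrt n / (\<alpha> * sqrt m) * exp (- \<omega> * t / 2) * sqrt (\<Sum>i<n. (resid i 0)^2)"
    by (simp add: mult_ac)
  ultimately show ?thesis
    unfolding vnorm_uminus by linarith
qed

lemma displacement_bound:
  assumes k: "k < m" and t: "t \<in> {0..T}"
  shows "vnorm d (\<lambda>j. v t k j - v 0 k j)
    \<le> 4 * sqrt n * sqrt (\<Sum>i<n. (fnet m d c (g 0) (v 0) (x i) - y i)^2) / (\<alpha> * \<omega> * sqrt m)"
proof -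
  define C where "C = 2 * sqrt n / (\<alpha> * sqrt m) * sqrt (\<Sum>i<n. (resid i 0)^2)"
  have "C \<ge> 0"
    using \<alpha>_pos by (auto simp: C_def intro!: divide_nonneg_nonneg mult_nonneg_nonneg sum_nonneg)
  text \<open>Integrate the speed bound \<open>C e\<^sup>-\<^sup>\<omega>\<^sup>s\<^sup>/\<^sup>2\<close>, whose primitive is \<open>-(2C/\<omega>) e\<^sup>-\<^sup>\<omega>\<^sup>s\<^sup>/\<^sup>2\<close>.\<close>
  have "vnorm d (\<lambda>j. v t k j - v 0 k j)
      \<le> - 2 * C / \<omega> * exp (- \<omega> * t / 2) - - 2 * C / \<omega> * exp (- \<omega> * 0 / 2)"
  proof (rule vnorm_displacement_le[OF _ _ _ t])
    fix s j assume "s \<in> {0..T}" "j < d"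
    then show "((\<lambda>s. v s k j) has_real_derivative - grad_v n m d x y c (g s) (v s) k j) (at s within {0..T})"
      using v_has_derivative k by blast
  next
    fix s assume "s \<in> {0..T}"
    show "((\<lambda>s. - 2 * C / \<omega> * exp (- \<omega> * s / 2)) has_real_derivative C * exp (- \<omega> * s / 2))
        (at s within {0..T})"
      using \<omega>_pos by (auto intro!: derivative_eq_intros simp: field_simps)
    show "vnorm d (\<lambda>j. - grad_v n m d x y c (g s) (v s) k j) \<le> C * exp (- \<omega> * s / 2)"
      using vnorm_v_speed_le[OF \<open>s \<in> {0..T}\<close> k] by (simp add: C_def mult_ac)
  qed
  also have "\<dots> \<le> 2 * C / \<omega>"
    using \<open>C \<ge> 0\<close> \<omega>_pos by simp
  finally show ?thesis
    using \<alpha>_pos \<omega>_pos by (simp add: C_def resid_def field_simps)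
qed

end

lemma displacement_bound_on_large_init:
  assumes "\<alpha> > 0" and "\<omega> > 0" and "\<forall>i<n. vnorm d (x i) \<le> 1" and "r > 0" and "R \<le> r"
    and init: "(\<forall>k<m. c k \<in> {-1, 1}) \<and> (\<forall>k<m. \<exists>j<d. \<alpha> * r \<le> \<bar>V k j\<bar>)"
    and flow: "grad_flow n m d x y \<alpha> T V c v g"
    and "\<forall>t\<in>{0..T}. lambda_min n (\<lambda>i i'. Gmat m d x (v t) i i'
      + (1 / \<alpha>^2) * Vmat m d \<alpha> x c (g t) (v t) i i') \<ge> \<omega> / 2"
    and g_near: "\<forall>t\<in>{0..T}. \<forall>k<m. \<bar>g t k - g 0 k\<bar> \<le> R"
  shows "\<forall>k<m. \<forall>t\<in>{0..T}. vnorm d (\<lambda>j. v t k j - v 0 k j)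
    \<le> 4 * sqrt n * sqrt (\<Sum>i<n. (fnet m d c (g 0) (v 0) (x i) - y i)^2) / (\<alpha> * \<omega> * sqrt m)"
proof -
  have norm: "\<alpha> * r \<le> vnorm d (V k)" if "k < m" for k
  proof -
    obtain j where "j < d" "\<alpha> * r \<le> \<bar>V k j\<bar>"
      using init \<open>k < m\<close> by blast
    then show ?thesis
      using abs_le_vnorm[of j d "V k"] by linarith
  qed
  have "\<bar>g t k - g 0 k\<bar> \<le> g 0 k" if "t \<in> {0..T}" "k < m" for t k
  proof -
    have "\<alpha> * g 0 k = vnorm d (V k)"
      using flow \<open>k < m\<close> \<open>\<alpha> > 0\<close> by (simp add: grad_flow_def)
    moreover have "\<alpha> * R \<le> \<alpha> * r"
      using \<open>R \<le> r\<close> \<open>\<alpha> > 0\<close> by simp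
    ultimately have "\<alpha> * R \<le> \<alpha> * g 0 k"
      using norm[OF \<open>k < m\<close>] by linarith
    then have "R \<le> g 0 k"
      using \<open>\<alpha> > 0\<close> by simp
    moreover have "\<bar>g t k - g 0 k\<bar> \<le> R"
      using g_near that by blast
    ultimately show ?thesis
      by linarith
  qed
  moreover have "vnorm d (V k) > 0" if "k < m" for k
    using norm[OF that] \<open>\<alpha> > 0\<close> \<open>r > 0\<close> by (meson mult_pos_pos order_less_le_trans)
  ultimately interpret relu_flow_spectral n m d x y \<alpha> T V c v g \<omega>
    using assms by unfold_locales auto
  show ?thesis
    using displacement_bound by blast
qed

lemma powr_ratio_root_identities:
  fixes m \<delta> :: real and d :: nat
  assumes "d \<ge> 1" and "m > 0" and "\<delta> > 0"
  shows "m * ((\<delta> / m) powr (1 / d)) ^ d = \<delta>"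
    and "1 / ((m / \<delta>) powr (1 / d)) = (\<delta> / m) powr (1 / d)"
proof -
  have "((\<delta> / m) powr (1 / d)) ^ d = (\<delta> / m) powr (1 / d * d)"
    using assms by (simp add: powr_realpow[symmetric] powr_powr)
  then show "m * ((\<delta> / m) powr (1 / d)) ^ d = \<delta>"
    using assms by simp
  show "1 / ((m / \<delta>) powr (1 / d)) = (\<delta> / m) powr (1 / d)"
    using assms by (simp add: powr_divide)
qed

theorem lemmaB7:
  fixes n m d :: nat and x :: "nat \<Rightarrow> nat \<Rightarrow> real" and y :: "nat \<Rightarrow> real"
    and \<alpha> T \<omega> R\<^sub>g \<delta> :: real
  assumes "d \<ge> 1" and "m \<ge> 1" and "\<alpha> > 0" and "\<omega> > 0" and "\<delta> > 0"
    and "\<forall>i<n. vnorm d (x i) \<le> 1"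
    and "R\<^sub>g \<le> 1 / ((real m / \<delta>) powr (1 / real d))"
  shows "\<exists>E \<in> sets (init_measure m d \<alpha>). measure (init_measure m d \<alpha>) E \<ge> 1 - \<delta> \<and>
     (\<forall>(V, c) \<in> E. \<forall>v g.
        grad_flow n m d x y \<alpha> T V c v g \<and>
        (\<forall>t\<in>{0..T}. lambda_min n (\<lambda>i i'. Gmat m d x (v t) i i'
             + (1 / \<alpha>^2) * Vmat m d \<alpha> x c (g t) (v t) i i') \<ge> \<omega> / 2) \<and>
        (\<forall>t\<in>{0..T}. \<forall>k<m. \<bar>g t k - g 0 k\<bar> \<le> R\<^sub>g)
        \<longrightarrow> (\<forall>k<m. \<forall>t\<in>{0..T}.
              vnorm d (\<lambda>j. v t k j - v 0 k j)
              \<le> 4 * sqrt n * sqrt (\<Sum>i<n. (fnet m d c (g 0) (v 0) (x i) - y i)^2)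
                / (\<alpha> * \<omega> * sqrt m)))"
proof -
  define r where "r = (\<delta> / m) powr (1 / d)"
  have "r > 0" "real m * r ^ d = \<delta>" "R\<^sub>g \<le> r"
    using powr_ratio_root_identities[of d "real m" \<delta>] assms by (auto simp: r_def)
  obtain E where E: "E \<in> sets (init_measure m d \<alpha>)" "measure (init_measure m d \<alpha>) E \<ge> 1 - \<delta>"
    and large: "\<And>V c. (V, c) \<in> E \<Longrightarrow> (\<forall>k<m. c k \<in> {-1, 1}) \<and> (\<forall>k<m. \<exists>j<d. \<alpha> * r \<le> \<bar>V k j\<bar>)"
    using init_measure_event_large_entries[OF \<open>\<alpha> > 0\<close> less_imp_le[OF \<open>r > 0\<close>]] \<open>real m * r ^ d = \<delta>\<close> by metis
  show ?thesis
    using displacement_bound_on_large_init[OF \<open>\<alpha> > 0\<close> \<open>\<omega> > 0\<close> assms(6) \<open>r > 0\<close> \<open>R\<^sub>g \<le> r\<close> large]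
    by (intro bexI[OF _ E(1)] conjI E(2) ballI case_prodI2) blast
qed

end
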